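(* Let $(M,\omega)$ be a $2$-dimensional symplectic manifold, $F\colon M\to\mathbb{R}$ smooth, $p$ a nondegenerate hyperbolic singular point of $F$, and $Z$ a neighbourhood of $p$ with coordinates $(x,y)$ identifying $Z$ with $\{|x|<\varepsilon,\ |y|<\varepsilon,\ |xy|<\eta\}$ ($0<\eta<\varepsilon^2$), $p\mapsto(0,0)$, such that $\omega=dx\wedge dy$ and the leaves of the foliation by level sets of $F$ in $Z$ are the level sets of $xy$. Let $\mathbb{L}$ be a prequantum line bundle with connection of curvature $\omega$, and let $s_0$ be a trivializing section over $Z$ with potential one-form $\tfrac12(x\,dy-y\,dx)$; identify sections over $Z$ with complex functions via $s_0$. For $j=1,2,3,4$ let $Z_j$ be the intersection of $Z$ with the $j$-th open quadrant of $\mathbb{R}^2$, and $I_j=(0,\eta)$ for $j=1,3$, $I_j=(-\eta,0)$ for $j=2,4$. Then: (i) if $\sigma$ is a smooth leafwise flat section over $Z$, there are smooth functions $a_j\colon I_j\to\mathbb{C}$, each analytically flat at $0$ (i.e. extending smoothly to $0$ with all one-sided derivatives at $0$ equal to $0$), such that $\sigma(x,y)=a_j(xy)\,e^{-\frac{i}{2}xy\ln\left|\frac{x}{y}\right|}$ on $Z_j$ for each $j$; (ii) conversely, given four such functions $a_1,\dots,a_4$, the function equal to $a_j(xy)\,e^{-\frac{i}{2}xy\ln\left|\frac{x}{y}\right|}$ on $Z_j$ and to $0$ on the axes $\{xy=0\}$ is a smooth leafwise flat section over $Z$.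
   Context: Potential one-form of a trivialization $s$: $\nabla_X(\psi s)=(X(\psi)-i\psi\Theta(X))s$; curvature $\omega$ means $d\Theta=\omega$. A section is leafwise flat if $\nabla_X\sigma=0$ for all $X$ tangent to the leaves (level sets of $xy$ in $Z$). A nondegenerate hyperbolic singular point is one where $dF=0$ and the Hessian is nondegenerate and indefinite. *)

theory Defs
  imports "HOL-Analysis.Analysis"
begin

fun Ck :: "nat \<Rightarrow> 'a::real_normed_vector set \<Rightarrow> ('a \<Rightarrow> 'b::real_normed_vector) \<Rightarrow> bool" where
  "Ck 0 S f = continuous_on S f"
| "Ck (Suc n) S f = ((\<forall>z\<in>S. f differentiable (at z)) \<and>
      (\<forall>v. Ck n S (\<lambda>z. frechet_derivative f (at z) v)))"

definition smooth_on :: "'a::real_normed_vector set \<Rightarrow> ('a \<Rightarrow> 'b::real_normed_vector) \<Rightarrow> bool" where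
  "smooth_on S f \<longleftrightarrow> (\<forall>n. Ck n S f)"

definition nth_vderiv :: "nat \<Rightarrow> (real \<Rightarrow> 'b::real_normed_vector) \<Rightarrow> real \<Rightarrow> 'b" where
  "nth_vderiv n a = ((\<lambda>g t. vector_derivative g (at t)) ^^ n) a"

text \<open>Analytically flat at 0 (from the side of the interval I): a extends smoothly to 0
  with all one-sided derivatives at 0 equal to 0, i.e. every derivative tends to 0 at 0 within I.\<close>
definition flat_at_0 :: "real set \<Rightarrow> (real \<Rightarrow> complex) \<Rightarrow> bool" where
  "flat_at_0 I a \<longleftrightarrow> (\<forall>n. (nth_vderiv n a \<longlongrightarrow> 0) (at 0 within I))"

definition Zset :: "real \<Rightarrow> real \<Rightarrow> (real \<times> real) set" where
  "Zset \<epsilon> \<eta> = {(x, y). \<bar>x\<bar> < \<epsilon> \<and> \<bar>y\<bar> < \<epsilon> \<and> \<bar>x * y\<bar> < \<eta>}"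

definition quadrant :: "nat \<Rightarrow> (real \<times> real) set" where
  "quadrant j = (if j = 1 then {(x, y). x > 0 \<and> y > 0}
                 else if j = 2 then {(x, y). x < 0 \<and> y > 0}
                 else if j = 3 then {(x, y). x < 0 \<and> y < 0}
                 else if j = 4 then {(x, y). x > 0 \<and> y < 0} else {})"

definition quad_index :: "real \<times> real \<Rightarrow> nat" where
  "quad_index z = (if fst z > 0 \<and> snd z > 0 then 1
                   else if fst z < 0 \<and> snd z > 0 then 2
                   else if fst z < 0 \<and> snd z < 0 then 3 else 4)"

definition Iint :: "real \<Rightarrow> nat \<Rightarrow> real set" where
  "Iint \<eta> j = (if j = 1 \<or> j = 3 then {0<..<\<eta>} else {-\<eta><..<0})"

definition Theta :: "real \<times> real \<Rightarrow> real \<times> real \<Rightarrow> real" where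
  "Theta z v = (fst z * snd v - snd z * fst v) / 2"

text \<open>Covariant derivative in the trivialization: nabla_v (psi s0) = (v(psi) - i psi Theta(v)) s0.\<close>
definition nabla :: "(real \<times> real \<Rightarrow> complex) \<Rightarrow> real \<times> real \<Rightarrow> real \<times> real \<Rightarrow> complex" where
  "nabla \<psi> z v = frechet_derivative \<psi> (at z) v - \<i> * \<psi> z * complex_of_real (Theta z v)"

text \<open>Hamiltonian vector field of xy (w.r.t. dx/\dy, up to sign): spans the tangent lines of the
  leaves (level sets of xy) at every point other than the singular point (0,0), where it vanishes.\<close>
definition leaf_field :: "real \<times> real \<Rightarrow> real \<times> real" where
  "leaf_field z = (fst z, - snd z)"

definition leafwise_flat :: "(real \<times> real) set \<Rightarrow> (real \<times> real \<Rightarrow> complex) \<Rightarrow> bool" where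
  "leafwise_flat S \<sigma> \<longleftrightarrow> (\<forall>z\<in>S. \<forall>t::real. nabla \<sigma> z (t *\<^sub>R leaf_field z) = 0)"

definition model_phase :: "real \<Rightarrow> real \<Rightarrow> complex" where
  "model_phase x y = exp (- (\<i> / 2) * complex_of_real (x * y * ln \<bar>x / y\<bar>))"

end

theory Submission
  imports Defs
begin

text \<open>Along the leaf \<open>xy = t\<close> leafwise flatness is a linear ODE whose solutions are constant multiples
  of the model phase, so on each quadrant \<open>\<sigma> = a(xy) \<cdot> model_phase x y\<close>. Reading \<open>a\<close> off along a
  vertical and along a horizontal line through the quadrant gives two factorisations
  \<open>a = B \<cdot> log_phase \<alpha> (-1/2) = C \<cdot> log_phase (-\<alpha>) (1/2)\<close> on the relevant side of \<open>0\<close>, with \<open>B\<close>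
  and \<open>C\<close> smooth across \<open>0\<close>. As \<open>B \<cdot> e\<^sup>i\<^sup>\<alpha>\<^sup>t\<close> is then \<open>C \<cdot> e\<^sup>-\<^sup>i\<^sup>\<alpha>\<^sup>t\<close> times \<open>log_phase 0 1\<close>, whose
  derivative carries the unbounded factor \<open>ln \<bar>t\<bar>\<close>, all derivatives of \<open>C\<close>, and hence of \<open>a\<close>,
  must tend to \<open>0\<close>.

  Conversely, flat amplitudes absorb every singularity of the phase: finite sums of terms
  \<open>b(xy) \<cdot> m(x, y) \<cdot> model_phase x y\<close>, with \<open>b\<close> flat and \<open>m\<close> built from \<open>x, y, 1/x, 1/y, ln |x/y|\<close>,
  are \<open>O((xy)\<^sup>2)\<close> near the axes and closed under differentiation, so the glued section is smooth by
  coinduction.\<close>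

section \<open>Smooth functions\<close>

lemma has_derivative_cong_open:
  assumes "open S" "z \<in> S" "\<And>w. w \<in> S \<Longrightarrow> f w = g w"
  shows "(f has_derivative D) (at z) \<longleftrightarrow> (g has_derivative D) (at z)"
  using has_derivative_transform_within_open[OF _ assms(1,2)] assms(3) by (metis (no_types, lifting))

lemma frechet_derivative_cong_open:
  assumes "open S" "z \<in> S" "\<And>w. w \<in> S \<Longrightarrow> f w = g w"
  shows "frechet_derivative f (at z) = frechet_derivative g (at z)"
  unfolding frechet_derivative_def using has_derivative_cong_open[OF assms] by simp

lemma differentiable_cong_open:
  assumes "open S" "z \<in> S" "\<And>w. w \<in> S \<Longrightarrow> f w = g w"
  shows "f differentiable (at z) \<longleftrightarrow> g differentiable (at z)"
  unfolding differentiable_def using has_derivative_cong_open[OF assms] by simp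

lemma Ck_cong_open:
  assumes "open S" "\<And>w. w \<in> S \<Longrightarrow> f w = g w"
  shows "Ck n S f = Ck n S g"
  using assms(2)
proof (induction n arbitrary: f g)
  case 0
  then show ?case using continuous_on_cong[OF refl, of S f g] by simp
next
  case (Suc n)
  have "f differentiable (at z) \<longleftrightarrow> g differentiable (at z)" if "z \<in> S" for z
    by (rule differentiable_cong_open[OF assms(1) that]) (rule Suc.prems)
  moreover have "Ck n S (\<lambda>z. frechet_derivative f (at z) v) = Ck n S (\<lambda>z. frechet_derivative g (at z) v)" for v
    by (rule Suc.IH) (simp add: frechet_derivative_cong_open[OF assms(1) _ Suc.prems])
  ultimately show ?case by (metis Ck.simps(2))
qed

lemma smooth_on_cong_open:
  assumes "open S" "\<And>w. w \<in> S \<Longrightarrow> f w = g w"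
  shows "smooth_on S f = smooth_on S g"
  using Ck_cong_open[OF assms] unfolding smooth_on_def by simp

lemma smooth_on_coinduct:
  assumes step: "\<And>g. P g \<Longrightarrow> continuous_on S g \<and> (\<forall>z\<in>S. g differentiable (at z)) \<and>
              (\<forall>v. P (\<lambda>z. frechet_derivative g (at z) v))"
    and "P f"
  shows "smooth_on S f"
proof -
  have "\<forall>g. P g \<longrightarrow> Ck n S g" for n
    by (induction n) (use step in auto)
  then show ?thesis using assms(2) unfolding smooth_on_def by blast
qed

lemma smooth_on_differentiable: "smooth_on S f \<Longrightarrow> z \<in> S \<Longrightarrow> f differentiable (at z)"
  unfolding smooth_on_def by (metis Ck.simps(2))

lemma smooth_on_frechet_derivative:
  "smooth_on S f \<Longrightarrow> smooth_on S (\<lambda>z. frechet_derivative f (at z) v)"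
  unfolding smooth_on_def by (metis Ck.simps(2))

lemma smooth_on_has_derivative:
  "smooth_on S f \<Longrightarrow> z \<in> S \<Longrightarrow> (f has_derivative frechet_derivative f (at z)) (at z)"
  using smooth_on_differentiable frechet_derivative_works by blast

definition infinitely_differentiable_on :: "real set \<Rightarrow> (real \<Rightarrow> 'b::real_normed_vector) \<Rightarrow> bool" where
  "infinitely_differentiable_on I f \<longleftrightarrow> (\<forall>n. \<forall>t\<in>I. nth_vderiv n f differentiable (at t))"

lemma nth_vderiv_0[simp]: "nth_vderiv 0 f = f"
  by (simp add: nth_vderiv_def)

lemma nth_vderiv_Suc: "nth_vderiv (Suc n) f t = vector_derivative (nth_vderiv n f) (at t)"
  by (simp add: nth_vderiv_def)

lemma nth_vderiv_Suc': "nth_vderiv (Suc n) f = nth_vderiv n (\<lambda>t. vector_derivative f (at t))"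
  unfolding nth_vderiv_def by (simp only: funpow_Suc_right o_apply)

lemma nth_vderiv_cong_open:
  assumes "open S" "\<And>w. w \<in> S \<Longrightarrow> f w = g w" "t \<in> S"
  shows "nth_vderiv n f t = nth_vderiv n g t"
  using assms(3)
proof (induction n arbitrary: t)
  case 0 then show ?case using assms by simp
next
  case (Suc n)
  have "(nth_vderiv n f has_vector_derivative D) (at t) \<longleftrightarrow> (nth_vderiv n g has_vector_derivative D) (at t)" for D
    unfolding has_vector_derivative_def by (rule has_derivative_cong_open[OF assms(1) Suc.prems Suc.IH])
  then show ?case by (simp add: nth_vderiv_Suc vector_derivative_def)
qed

lemma nth_vderiv_eq_derivative_sequence:
  assumes S: "open S"
    and F: "\<And>n t. t \<in> S \<Longrightarrow> (F n has_vector_derivative F (Suc n) t) (at t)"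
    and f: "\<And>t. t \<in> S \<Longrightarrow> f t = F 0 t"
  shows "t \<in> S \<Longrightarrow> nth_vderiv n f t = F n t"
proof (induction n arbitrary: t)
  case 0 then show ?case using f by simp
next
  case (Suc n t)
  have "(nth_vderiv n f has_vector_derivative F (Suc n) t) (at t)"
    using F[OF Suc.prems, of n] unfolding has_vector_derivative_def
    by (rule has_derivative_transform_within_open[OF _ S Suc.prems]) (simp add: Suc.IH)
  then show ?case by (simp add: nth_vderiv_Suc vector_derivative_at)
qed

lemma infinitely_differentiable_on_derivative_sequence:
  assumes S: "open S"
    and F: "\<And>n t. t \<in> S \<Longrightarrow> (F n has_vector_derivative F (Suc n) t) (at t)"
    and f: "\<And>t. t \<in> S \<Longrightarrow> f t = F 0 t"
  shows "infinitely_differentiable_on S f"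
  unfolding infinitely_differentiable_on_def
proof (intro allI ballI)
  fix n t assume t: "t \<in> S"
  have "F n differentiable (at t)"
    using F[OF t, of n] unfolding has_vector_derivative_def differentiable_def by blast
  moreover have "\<And>w. w \<in> S \<Longrightarrow> nth_vderiv n f w = F n w"
    by (rule nth_vderiv_eq_derivative_sequence[OF S F f])
  ultimately show "nth_vderiv n f differentiable (at t)"
    using differentiable_cong_open[OF S t] by blast
qed

lemma infinitely_differentiable_on_has_vector_derivative:
  "infinitely_differentiable_on I f \<Longrightarrow> t \<in> I \<Longrightarrow>
     (nth_vderiv n f has_vector_derivative nth_vderiv (Suc n) f t) (at t)"
  unfolding infinitely_differentiable_on_def nth_vderiv_Suc using vector_derivative_works by blast

lemma infinitely_differentiable_on_subset:
  "infinitely_differentiable_on I f \<Longrightarrow> J \<subseteq> I \<Longrightarrow> infinitely_differentiable_on J f"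
  unfolding infinitely_differentiable_on_def by blast

lemma infinitely_differentiable_on_vector_derivative:
  "infinitely_differentiable_on I f \<Longrightarrow> infinitely_differentiable_on I (\<lambda>t. vector_derivative f (at t))"
  unfolding infinitely_differentiable_on_def by (simp add: nth_vderiv_Suc'[symmetric])

lemma infinitely_differentiable_on_isCont:
  "infinitely_differentiable_on I f \<Longrightarrow> t \<in> I \<Longrightarrow> isCont (nth_vderiv n f) t"
  unfolding infinitely_differentiable_on_def using differentiable_imp_continuous_within by blast

lemma frechet_derivative_real_domain:
  fixes f :: "real \<Rightarrow> 'b::real_normed_vector"
  assumes "f differentiable (at t)"
  shows "frechet_derivative f (at t) v = v *\<^sub>R vector_derivative f (at t)"
  using frechet_derivative_at[symmetric, OF vector_derivative_works[THEN iffD1, OF assms,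
      unfolded has_vector_derivative_def]] by simp

lemma smooth_on_imp_infinitely_differentiable_on:
  fixes f :: "real \<Rightarrow> 'b::real_normed_vector"
  assumes "open I" "smooth_on I f" shows "infinitely_differentiable_on I f"
proof -
  have "smooth_on I (nth_vderiv n f)" for n
  proof (induction n)
    case 0 then show ?case using assms by simp
  next
    case (Suc n)
    have "smooth_on I (\<lambda>t. frechet_derivative (nth_vderiv n f) (at t) 1)"
      using smooth_on_frechet_derivative[OF Suc] .
    moreover have "\<And>t. t \<in> I \<Longrightarrow> frechet_derivative (nth_vderiv n f) (at t) 1 = nth_vderiv (Suc n) f t"
      using frechet_derivative_real_domain[OF smooth_on_differentiable[OF Suc], of _ 1]
      by (simp add: nth_vderiv_Suc)
    ultimately show ?case by (subst (asm) smooth_on_cong_open[OF assms(1)])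
  qed
  then show ?thesis unfolding infinitely_differentiable_on_def by (intro allI ballI smooth_on_differentiable)
qed

lemma infinitely_differentiable_on_imp_smooth_on:
  fixes f :: "real \<Rightarrow> complex"
  assumes I: "open I" and f: "infinitely_differentiable_on I f"
  shows "smooth_on I f"
proof (rule smooth_on_coinduct[where P="\<lambda>g. \<exists>n c. \<forall>t\<in>I. g t = c * nth_vderiv n f t"])
  fix g assume "\<exists>n c. \<forall>t\<in>I. g t = c * nth_vderiv n f t"
  then obtain n c where g: "\<And>t. t\<in>I \<Longrightarrow> g t = c * nth_vderiv n f t" by blast
  have hg: "(g has_vector_derivative c * nth_vderiv (Suc n) f t) (at t)" if t: "t \<in> I" for t
    using has_vector_derivative_mult_right[OF infinitely_differentiable_on_has_vector_derivative[OF f t]]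
    unfolding has_vector_derivative_def
    by (rule has_derivative_transform_within_open[OF _ I t]) (simp add: g)
  then have diff: "\<forall>z\<in>I. g differentiable (at z)"
    unfolding has_vector_derivative_def differentiable_def by blast
  moreover have "continuous_on I g"
    using diff by (intro continuous_at_imp_continuous_on ballI differentiable_imp_continuous_within) blast
  moreover have "frechet_derivative g (at t) v = (of_real v * c) * nth_vderiv (Suc n) f t" if "t \<in> I" for t v
    using frechet_derivative_real_domain[of g t v] diff vector_derivative_at[OF hg[OF that]] that
    by (simp add: scaleR_conv_of_real)
  ultimately show "continuous_on I g \<and> (\<forall>z\<in>I. g differentiable (at z)) \<and>
      (\<forall>v. \<exists>n c. \<forall>t\<in>I. frechet_derivative g (at t) v = c * nth_vderiv n f t)" by blast
qed (auto intro: exI[of _ 0] exI[of _ 1])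

lemma has_vector_derivative_of_real:
  "(\<theta> has_real_derivative d) (at t) \<Longrightarrow> ((\<lambda>t. complex_of_real (\<theta> t)) has_vector_derivative of_real d) (at t)"
  unfolding has_real_derivative_iff_has_vector_derivative
  by (rule bounded_linear.has_vector_derivative[OF bounded_linear_of_real])

lemma has_vector_derivative_exp:
  fixes h :: "real \<Rightarrow> complex"
  assumes "(h has_vector_derivative h') (at t)"
  shows "((\<lambda>t. exp (h t)) has_vector_derivative exp (h t) * h') (at t)"
  using field_vector_diff_chain_at[OF assms DERIV_exp] by (simp add: o_def mult.commute)

lemma binomial_Suc_split: "Suc n choose k = (n choose k) + (if k = 0 then 0 else n choose (k - 1))"
  by (cases k) simp_all

lemma binomial_sum_Suc:
  fixes a b :: "nat \<Rightarrow> 'a::comm_ring_1"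
  shows "(\<Sum>i = 0..n. of_nat (n choose i) * (a i * b (Suc (n - i)) + a (Suc i) * b (n - i))) =
         (\<Sum>i = 0..Suc n. of_nat (Suc n choose i) * a i * b (Suc n - i))"
proof -
  have "(\<Sum>i = 0..n. of_nat (n choose i) * (a (Suc i) * b (n - i) + b (Suc (n - i)) * a i)) =
      b 0 * a (Suc n) + (\<Sum>i = 0..n. a i * (of_nat (Suc n choose i) * b (Suc n - i)))"
    apply (simp add: binomial_Suc_split algebra_simps sum.distrib)
    apply (subst (4) sum_Suc_reindex)
    apply (auto simp: algebra_simps Suc_diff_le intro: sum.cong)
    done
  then show ?thesis by (simp add: algebra_simps)
qed

lemma nth_vderiv_mult:
  fixes f g :: "real \<Rightarrow> complex"
  assumes S: "open S" and f: "infinitely_differentiable_on S f" and g: "infinitely_differentiable_on S g"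
  shows "t \<in> S \<Longrightarrow> nth_vderiv n (\<lambda>t. f t * g t) t =
     (\<Sum>i = 0..n. of_nat (n choose i) * nth_vderiv i f t * nth_vderiv (n-i) g t)"
    and "infinitely_differentiable_on S (\<lambda>t. f t * g t)"
proof -
  define F where "F n t = (\<Sum>i = 0..n. of_nat (n choose i) * nth_vderiv i f t * nth_vderiv (n-i) g t)" for n t
  have "(F n has_vector_derivative F (Suc n) t) (at t)" if t: "t \<in> S" for n t
  proof -
    have "(F n has_vector_derivative (\<Sum>i = 0..n. of_nat (n choose i) *
        (nth_vderiv i f t * nth_vderiv (Suc (n-i)) g t + nth_vderiv (Suc i) f t * nth_vderiv (n-i) g t))) (at t)"
      unfolding F_def mult.assoc
      by (intro has_vector_derivative_sum has_vector_derivative_mult_right has_vector_derivative_mult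
          infinitely_differentiable_on_has_vector_derivative[OF f t]
          infinitely_differentiable_on_has_vector_derivative[OF g t])
    moreover have "(\<Sum>i = 0..n. of_nat (n choose i) *
        (nth_vderiv i f t * nth_vderiv (Suc (n-i)) g t + nth_vderiv (Suc i) f t * nth_vderiv (n-i) g t)) = F (Suc n) t"
      unfolding F_def by (rule binomial_sum_Suc)
    ultimately show ?thesis by simp
  qed
  moreover have "f t * g t = F 0 t" for t by (simp add: F_def)
  ultimately show "t \<in> S \<Longrightarrow> nth_vderiv n (\<lambda>t. f t * g t) t = F n t"
    and "infinitely_differentiable_on S (\<lambda>t. f t * g t)"
    by (intro nth_vderiv_eq_derivative_sequence[OF S] infinitely_differentiable_on_derivative_sequence[OF S];
        simp)+
qed

lemmas infinitely_differentiable_on_mult = nth_vderiv_mult(2)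

lemma infinitely_differentiable_on_exp_linear:
  fixes c :: complex
  shows "infinitely_differentiable_on S (\<lambda>t. exp (of_real t * c))"
proof (rule infinitely_differentiable_on_subset[OF _ subset_UNIV],
    rule infinitely_differentiable_on_derivative_sequence[where F="\<lambda>n t. c ^ n * exp (of_real t * c)"])
  fix n and t :: real
  have "((\<lambda>t. complex_of_real t * c) has_vector_derivative 1 * c) (at t)"
    by (rule has_vector_derivative_mult_left) (use has_vector_derivative_of_real[OF DERIV_ident[of "at t"]] in simp)
  from has_vector_derivative_exp[OF this]
  show "((\<lambda>t. c ^ n * exp (of_real t * c)) has_vector_derivative c ^ Suc n * exp (of_real t * c)) (at t)"
    by (auto intro!: has_vector_derivative_mult_right[THEN has_vector_derivative_eq_rhs] simp: algebra_simps)
qed simp_all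

section \<open>Flatness at an endpoint\<close>

definition one_sided_interval :: "real set \<Rightarrow> real \<Rightarrow> bool" where
  "one_sided_interval S \<delta> \<longleftrightarrow> \<delta> > 0 \<and> (S = {0<..<\<delta>} \<or> S = {-\<delta><..<0})"

lemma one_sided_interval_open: "one_sided_interval S \<delta> \<Longrightarrow> open S"
  unfolding one_sided_interval_def by auto

lemma one_sided_interval_memD: "one_sided_interval S \<delta> \<Longrightarrow> t \<in> S \<Longrightarrow> t \<noteq> 0 \<and> \<bar>t\<bar> < \<delta>"
  unfolding one_sided_interval_def by auto

lemma one_sided_interval_restrict:
  "one_sided_interval S \<delta> \<Longrightarrow> d > 0 \<Longrightarrow> one_sided_interval (S \<inter> {-d<..<d}) (min \<delta> d)"
  unfolding one_sided_interval_def by auto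

lemma one_sided_interval_at_0_nontrivial: "one_sided_interval S \<delta> \<Longrightarrow> at 0 within S \<noteq> bot"
  unfolding one_sided_interval_def trivial_limit_within
  using islimpt_greaterThanLessThan1[of 0 \<delta>] islimpt_greaterThanLessThan2[of "-\<delta>" 0] by auto

lemma one_sided_interval_closed_segment:
  assumes S: "one_sided_interval S \<delta>" and t: "t \<in> S" and u: "u \<in> S" "\<bar>u\<bar> \<le> \<bar>t\<bar>"
    and x: "x \<in> closed_segment t u"
  shows "x \<in> S \<and> \<bar>x\<bar> \<le> \<bar>t\<bar>"
  using S t u x unfolding one_sided_interval_def
  by (auto simp: closed_segment_eq_real_ivl split: if_splits)

lemma norm_le_pow_Suc_of_derivative_bound:
  fixes f :: "real \<Rightarrow> 'b::real_normed_vector"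
  assumes S: "one_sided_interval S \<delta>"
   and D: "\<And>t. t\<in>S \<Longrightarrow> (f has_vector_derivative f' t) (at t)"
   and lim: "(f \<longlongrightarrow> 0) (at 0 within S)"
   and B: "\<And>t. t\<in>S \<Longrightarrow> norm (f' t) \<le> M * \<bar>t\<bar>^k"
   and t: "t \<in> S"
  shows "norm (f t) \<le> M * \<bar>t\<bar>^Suc k"
proof -
  have tnz: "t \<noteq> 0" using one_sided_interval_memD[OF S t] by blast
  have M0: "0 \<le> M * \<bar>t\<bar>^k" using B[OF t] norm_ge_zero order_trans by blast
  have "\<bar>t\<bar>^k > 0" using tnz by simp
  then have M0': "0 \<le> M" using M0 by (metis not_less zero_le_mult_iff)
  have lipschitz: "norm (f t - f u) \<le> M * \<bar>t\<bar>^k * norm (t - u)" if u: "u \<in> S" "\<bar>u\<bar> \<le> \<bar>t\<bar>" for u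
  proof (rule differentiable_bound[of "closed_segment t u" f "\<lambda>x h. h *\<^sub>R f' x"])
    note seg = one_sided_interval_closed_segment[OF S t u]
    show "(f has_derivative (\<lambda>h. h *\<^sub>R f' x)) (at x within closed_segment t u)"
      if "x \<in> closed_segment t u" for x
      using D[of x] seg[OF that] unfolding has_vector_derivative_def by (blast intro: has_derivative_at_withinI)
    show "onorm (\<lambda>h. h *\<^sub>R f' x) \<le> M * \<bar>t\<bar> ^ k" if x: "x \<in> closed_segment t u" for x
    proof (rule onorm_bound[OF M0])
      fix h :: real
      have "norm (f' x) \<le> M * \<bar>x\<bar>^k" using B[of x] seg[OF x] by blast
      also have "\<dots> \<le> M * \<bar>t\<bar>^k"
        using seg[OF x] by (intro mult_left_mono power_mono M0') simp_all
      finally show "norm (h *\<^sub>R f' x) \<le> M * \<bar>t\<bar> ^ k * norm h"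
        by (simp add: mult_left_mono[OF _ abs_ge_zero] mult.commute)
    qed
  qed auto
  have "norm (f t - 0) \<le> M * \<bar>t\<bar>^k * norm (t - 0)"
  proof (rule tendsto_le[OF one_sided_interval_at_0_nontrivial[OF S]])
    show "((\<lambda>u. norm (f t - f u)) \<longlongrightarrow> norm (f t - 0)) (at 0 within S)"
      by (intro tendsto_intros lim)
    show "((\<lambda>u. M * \<bar>t\<bar>^k * norm (t - u)) \<longlongrightarrow> M * \<bar>t\<bar>^k * norm (t - 0)) (at 0 within S)"
      by (intro tendsto_intros)
    have "eventually (\<lambda>u. u \<in> S \<and> \<bar>u\<bar> < \<bar>t\<bar>) (at 0 within S)"
      unfolding eventually_at using tnz by (intro exI[of _ "\<bar>t\<bar>"]) auto
    then show "eventually (\<lambda>u. norm (f t - f u) \<le> M * \<bar>t\<bar>^k * norm (t - u)) (at 0 within S)"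
      by (rule eventually_mono) (use lipschitz in \<open>simp del: real_norm_def\<close>)
  qed
  then show ?thesis by (simp add: mult_ac)
qed

lemma norm_iterated_derivative_le_pow:
  fixes D :: "nat \<Rightarrow> real \<Rightarrow> 'b::real_normed_vector"
  assumes S: "one_sided_interval S \<delta>"
   and DD: "\<And>k t. t\<in>S \<Longrightarrow> (D k has_vector_derivative D (Suc k) t) (at t)"
   and lim: "\<And>k. k < n \<Longrightarrow> (D k \<longlongrightarrow> 0) (at 0 within S)"
   and B: "\<And>t. t\<in>S \<Longrightarrow> norm (D n t) \<le> M"
  shows "k \<le> n \<Longrightarrow> t \<in> S \<Longrightarrow> norm (D k t) \<le> M * \<bar>t\<bar>^(n - k)"
proof (induction "n - k" arbitrary: k t)
  case 0
  then show ?case using B by simp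
next
  case (Suc d)
  have "norm (D k t) \<le> M * \<bar>t\<bar>^Suc (n - Suc k)"
  proof (rule norm_le_pow_Suc_of_derivative_bound[OF S DD lim _ Suc.prems(2)])
    show "k < n" using Suc.hyps(2) by simp
    show "norm (D (Suc k) u) \<le> M * \<bar>u\<bar> ^ (n - Suc k)" if "u \<in> S" for u
      using Suc.hyps Suc.prems(1) that by (intro Suc.hyps(1)) auto
  qed
  moreover have "Suc (n - Suc k) = n - k" using Suc.hyps(2) by simp
  ultimately show ?case by simp
qed

lemma isCont_locally_bounded:
  fixes g :: "real \<Rightarrow> 'b::real_normed_vector"
  assumes "isCont g x"
  shows "\<exists>M d. d > 0 \<and> (\<forall>t. \<bar>t - x\<bar> < d \<longrightarrow> norm (g t) \<le> M)"
proof -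
  obtain d where d: "d > 0" "\<And>t. dist t x < d \<Longrightarrow> dist (g t) (g x) < 1"
    using assms unfolding continuous_at_eps_delta by (meson zero_less_one)
  have "norm (g t) \<le> norm (g x) + 1" if "\<bar>t - x\<bar> < d" for t
    using d(2)[of t] that norm_triangle_ineq2[of "g t" "g x"] by (simp add: dist_norm dist_real_def)
  then show ?thesis using d(1) by blast
qed

lemma flat_imp_norm_le_pow:
  fixes f :: "real \<Rightarrow> 'b::real_normed_vector"
  assumes S: "one_sided_interval S \<delta>" and hd: "infinitely_differentiable_on S f"
    and lim: "\<And>k. (nth_vderiv k f \<longlongrightarrow> 0) (at 0 within S)"
  shows "\<exists>d>0. \<forall>t\<in>S. \<bar>t\<bar> < d \<longrightarrow> norm (nth_vderiv k f t) \<le> \<bar>t\<bar>^N"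
proof -
  have "eventually (\<lambda>t. norm (nth_vderiv (N + k) f t) < 1) (at 0 within S)"
    using lim[of "N+k"] unfolding tendsto_iff by (auto simp: dist_norm)
  then obtain d where d: "d > 0" and d2: "\<forall>t\<in>S. t \<noteq> 0 \<and> dist t 0 < d \<longrightarrow> norm (nth_vderiv (N + k) f t) < 1"
    unfolding eventually_at by (elim exE conjE) (rule that)
  define S' where "S' = S \<inter> {-d<..<d}"
  have S': "one_sided_interval S' (min \<delta> d)" unfolding S'_def by (rule one_sided_interval_restrict[OF S d(1)])
  have "norm (nth_vderiv (0 + k) f t) \<le> 1 * \<bar>t\<bar>^(N - 0)" if t: "t \<in> S'" for t
  proof (rule norm_iterated_derivative_le_pow[OF S', of "\<lambda>j. nth_vderiv (j + k) f" N 1 0 t])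
    show "(nth_vderiv (j + k) f has_vector_derivative nth_vderiv (Suc j + k) f u) (at u)"
      if "u \<in> S'" for j u using infinitely_differentiable_on_has_vector_derivative[OF hd] that unfolding S'_def by simp
    show "(nth_vderiv (j + k) f \<longlongrightarrow> 0) (at 0 within S')" for j
      using lim[of "j+k"] unfolding S'_def by (rule tendsto_within_subset) simp
    show "norm (nth_vderiv (N + k) f u) \<le> 1" if u: "u \<in> S'" for u
    proof -
      have "u \<noteq> 0" using one_sided_interval_memD[OF S' u] by blast
      moreover have "u \<in> S" "dist u 0 < d" using u unfolding S'_def by auto
      ultimately show ?thesis using d2 by fastforce
    qed
  qed (use t in simp_all)
  then show ?thesis using d(1) unfolding S'_def by (intro exI[of _ d]) (auto simp: abs_less_iff)
qed

section \<open>The logarithmic phase\<close>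

lemma DERIV_ln_abs:
  fixes t :: real assumes "t \<noteq> 0"
  shows "((\<lambda>t. ln \<bar>t\<bar>) has_real_derivative inverse t) (at t)"
proof (cases "t > 0")
  case True
  have "(ln has_real_derivative inverse t) (at t)" by (rule DERIV_ln[OF True])
  then show ?thesis
    by (rule has_field_derivative_transform_within_open[where S="{0<..}"]) (use True in auto)
next
  case False
  then have tn: "t < 0" using assms by simp
  have "((\<lambda>u. ln (- u)) has_real_derivative inverse (- t) * (- 1)) (at t)"
    by (rule DERIV_chain'[of "\<lambda>u. - u"]) (auto intro!: derivative_eq_intros DERIV_ln[of "-t"] simp: tn divide_inverse)
  then have "((\<lambda>u. ln (- u)) has_real_derivative inverse t) (at t)" by simp
  then show ?thesis
    by (rule has_field_derivative_transform_within_open[where S="{..<0}"]) (use tn in auto)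
qed

lemma DERIV_times_ln_abs:
  fixes t :: real assumes "t \<noteq> 0"
  shows "((\<lambda>t. t * ln \<bar>t\<bar>) has_real_derivative ln \<bar>t\<bar> + 1) (at t)"
  using DERIV_mult'[OF DERIV_ident DERIV_ln_abs[OF assms]] assms by (simp add: add.commute)

text \<open>A list of triples \<open>(c, p, r)\<close> encodes \<open>\<lambda>t. \<Sum> c \<cdot> t powi (- p) \<cdot> (ln \<bar>t\<bar>) ^ r\<close>; the derivatives
  of \<open>log_phase a b\<close> are such sums times \<open>log_phase a b\<close>.\<close>

fun log_laurent :: "(complex \<times> nat \<times> nat) list \<Rightarrow> real \<Rightarrow> complex" where
  "log_laurent [] t = 0"
| "log_laurent ((c,p,r)#ps) t = c * of_real (inverse t ^ p * ln \<bar>t\<bar> ^ r) + log_laurent ps t"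

fun log_laurent_deriv :: "(complex \<times> nat \<times> nat) list \<Rightarrow> (complex \<times> nat \<times> nat) list" where
  "log_laurent_deriv [] = []"
| "log_laurent_deriv ((c,p,r)#ps) = (c * of_nat r, Suc p, r - 1) # (- c * of_nat p, Suc p, r) # log_laurent_deriv ps"

lemma log_laurent_append[simp]: "log_laurent (ps @ qs) t = log_laurent ps t + log_laurent qs t"
  by (induction ps rule: log_laurent_deriv.induct) auto

fun phase_step :: "real \<Rightarrow> real \<Rightarrow> (complex \<times> nat \<times> nat) list \<Rightarrow> (complex \<times> nat \<times> nat) list" where
  "phase_step a b [] = []"
| "phase_step a b ((c,p,r)#ps) = (\<i> * of_real (a + b) * c, p, r) # (\<i> * of_real b * c, p, Suc r) # phase_step a b ps"

fun phase_coeff :: "real \<Rightarrow> real \<Rightarrow> nat \<Rightarrow> (complex \<times> nat \<times> nat) list" where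
  "phase_coeff a b 0 = [(1,0,0)]"
| "phase_coeff a b (Suc m) = log_laurent_deriv (phase_coeff a b m) @ phase_step a b (phase_coeff a b m)"

lemma log_laurent_phase_step:
  "log_laurent (phase_step a b ps) t = log_laurent ps t * (\<i> * of_real (a + b + b * ln \<bar>t\<bar>))"
  by (induction ps rule: log_laurent_deriv.induct) (auto simp: algebra_simps)

lemma log_laurent_phase_coeff_1: "log_laurent (phase_coeff a b 1) t = \<i> * of_real (a + b + b * ln \<bar>t\<bar>)"
  by (simp add: log_laurent_phase_step algebra_simps)

lemma DERIV_inverse_pow_times_ln_pow:
  fixes t :: real assumes t: "t \<noteq> 0"
  shows "((\<lambda>t. inverse t ^ p * ln \<bar>t\<bar> ^ r) has_real_derivative
     (of_nat r * inverse t ^ Suc p * ln \<bar>t\<bar> ^ (r - 1) - of_nat p * inverse t ^ Suc p * ln \<bar>t\<bar> ^ r)) (at t)"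
  by (rule DERIV_cong[OF DERIV_mult'[OF DERIV_power[OF DERIV_inverse[OF t]] DERIV_power[OF DERIV_ln_abs[OF t]]]])
     (cases p; cases r; simp add: algebra_simps)

lemma log_laurent_has_vector_derivative:
  fixes t :: real assumes t: "t \<noteq> 0"
  shows "((\<lambda>t. log_laurent ps t) has_vector_derivative log_laurent (log_laurent_deriv ps) t) (at t)"
proof (induction ps rule: log_laurent_deriv.induct)
  case 1 then show ?case by simp
next
  case (2 c p r ps)
  have "((\<lambda>t. c * complex_of_real (inverse t ^ p * ln \<bar>t\<bar> ^ r)) has_vector_derivative
     c * of_real (of_nat r * inverse t ^ Suc p * ln \<bar>t\<bar> ^ (r - 1) - of_nat p * inverse t ^ Suc p * ln \<bar>t\<bar> ^ r)) (at t)"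
    by (intro has_vector_derivative_mult_right has_vector_derivative_of_real DERIV_inverse_pow_times_ln_pow[OF t])
  from has_vector_derivative_add[OF this 2] show ?case
    by (simp add: algebra_simps)
qed

definition log_phase :: "real \<Rightarrow> real \<Rightarrow> real \<Rightarrow> complex" where
  "log_phase a b t = exp (\<i> * of_real (a * t + b * (t * ln \<bar>t\<bar>)))"

lemma norm_log_phase[simp]: "norm (log_phase a b t) = 1"
  unfolding log_phase_def by (simp add: norm_exp_i_times)

lemma log_phase_mult: "log_phase a b t * log_phase a' b' t = log_phase (a + a') (b + b') t"
  unfolding log_phase_def by (simp add: exp_add[symmetric] algebra_simps)

lemma log_phase_split: "log_phase a b t = exp (of_real t * (\<i> * of_real a)) * log_phase 0 b t"
  unfolding log_phase_def by (simp add: exp_add[symmetric] algebra_simps)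

lemma log_phase_0_0: "log_phase 0 0 t = 1"
  unfolding log_phase_def by simp

lemma log_phase_has_vector_derivative:
  fixes t :: real assumes t: "t \<noteq> 0"
  shows "(log_phase a b has_vector_derivative log_phase a b t * (\<i> * of_real (a + b + b * ln \<bar>t\<bar>))) (at t)"
proof -
  have "((\<lambda>t. a * t + b * (t * ln \<bar>t\<bar>)) has_real_derivative a * 1 + b * (ln \<bar>t\<bar> + 1)) (at t)"
    by (intro DERIV_add DERIV_cmult DERIV_ident DERIV_times_ln_abs[OF t])
  then have "((\<lambda>t. \<i> * of_real (a * t + b * (t * ln \<bar>t\<bar>))) has_vector_derivative
       \<i> * of_real (a * 1 + b * (ln \<bar>t\<bar> + 1))) (at t)"
    by (intro has_vector_derivative_mult_right has_vector_derivative_of_real)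
  from has_vector_derivative_exp[OF this] show ?thesis unfolding log_phase_def by (simp add: algebra_simps)
qed

lemma nth_vderiv_log_phase:
  assumes I: "open I" "0 \<notin> I"
  shows "t \<in> I \<Longrightarrow> nth_vderiv m (log_phase a b) t = log_laurent (phase_coeff a b m) t * log_phase a b t"
    and "infinitely_differentiable_on I (log_phase a b)"
proof -
  define F where "F = (\<lambda>m t. log_laurent (phase_coeff a b m) t * log_phase a b t)"
  have "(F m has_vector_derivative F (Suc m) t) (at t)" if "t \<in> I" for m t
  proof -
    have t: "t \<noteq> 0" using that I by auto
    show ?thesis
      using has_vector_derivative_mult[OF log_laurent_has_vector_derivative[OF t] log_phase_has_vector_derivative[OF t]]
      unfolding F_def by (rule has_vector_derivative_eq_rhs) (simp add: log_laurent_phase_step algebra_simps)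
  qed
  moreover have "log_phase a b t = F 0 t" for t by (simp add: F_def)
  ultimately show "t \<in> I \<Longrightarrow> nth_vderiv m (log_phase a b) t = F m t"
    and "infinitely_differentiable_on I (log_phase a b)"
    by (intro nth_vderiv_eq_derivative_sequence[OF I(1)] infinitely_differentiable_on_derivative_sequence[OF I(1)];
        simp)+
qed

lemmas infinitely_differentiable_on_log_phase = nth_vderiv_log_phase(2)

lemma abs_times_abs_ln_pow_le:
  fixes t :: real assumes t: "0 < \<bar>t\<bar>" "\<bar>t\<bar> \<le> 1"
  shows "\<bar>t\<bar> * \<bar>ln \<bar>t\<bar>\<bar>^r \<le> real r ^ r"
proof (cases "r = 0")
  case True then show ?thesis using t by simp
next
  case False
  define y where "y = - ln \<bar>t\<bar>"
  have y0: "0 \<le> y" unfolding y_def using t by simp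
  have ey: "exp y = inverse \<bar>t\<bar>" unfolding y_def using t by (simp add: exp_minus)
  have l: "\<bar>ln \<bar>t\<bar>\<bar> = y" unfolding y_def using t by simp
  have "(1 + y / real r) ^ r \<le> exp y"
    by (rule exp_ge_one_plus_x_over_n_power_n) (use y0 False in auto)
  moreover have "y ^ r = real r ^ r * (y / real r) ^ r"
    using False by (simp add: power_divide)
  moreover have "(y / real r) ^ r \<le> (1 + y / real r) ^ r"
    by (rule power_mono) (use y0 in auto)
  ultimately have "y ^ r \<le> real r ^ r * inverse \<bar>t\<bar>"
    by (metis ey mult_left_mono order_trans zero_le_power of_nat_0_le_iff)
  then have "\<bar>t\<bar> * y ^ r \<le> \<bar>t\<bar> * (real r ^ r * inverse \<bar>t\<bar>)"
    by (rule mult_left_mono) simp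
  also have "\<dots> = real r ^ r" using t by simp
  finally show ?thesis using l by simp
qed

lemma inverse_abs_power_increasing:
  fixes t :: real assumes t: "0 < \<bar>t\<bar>" "\<bar>t\<bar> \<le> 1" and "a \<le> K"
  shows "inverse \<bar>t\<bar> ^ a \<le> inverse \<bar>t\<bar> ^ K"
  by (rule power_increasing[OF assms(3)]) (use t in \<open>simp add: one_le_inverse\<close>)

lemma log_laurent_times_pow_bounded:
  assumes "\<forall>(c,p,r)\<in>set ps. c \<noteq> 0 \<longrightarrow> p < n \<or> (p = n \<and> r = 0)"
  shows "\<exists>C. \<forall>t::real. 0 < \<bar>t\<bar> \<and> \<bar>t\<bar> \<le> 1 \<longrightarrow> \<bar>t\<bar>^n * norm (log_laurent ps t) \<le> C"
  using assms
proof (induction ps rule: log_laurent_deriv.induct)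
  case 1 then show ?case by (intro exI[of _ 0]) simp
next
  case (2 c p r ps)
  then obtain C where C: "\<And>t::real. 0 < \<bar>t\<bar> \<and> \<bar>t\<bar> \<le> 1 \<Longrightarrow> \<bar>t\<bar>^n * norm (log_laurent ps t) \<le> C"
    by auto
  have hc: "c \<noteq> 0 \<Longrightarrow> p < n \<or> (p = n \<and> r = 0)" using "2.prems" by auto
  have "\<bar>t\<bar>^n * norm (log_laurent ((c,p,r)#ps) t) \<le> norm c * (real r ^ r + 1) + C" if t: "0 < \<bar>t\<bar>" "\<bar>t\<bar> \<le> 1" for t :: real
  proof -
    have T: "\<bar>t\<bar>^n * norm (c * complex_of_real (inverse t ^ p * ln \<bar>t\<bar> ^ r)) \<le> norm c * (real r ^ r + 1)"
    proof (cases "c = 0")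
      case True then show ?thesis by simp
    next
      case False
      have eq: "\<bar>t\<bar>^n * norm (c * complex_of_real (inverse t ^ p * ln \<bar>t\<bar> ^ r)) =
          norm c * (\<bar>t\<bar>^n * inverse \<bar>t\<bar> ^ p * \<bar>ln \<bar>t\<bar>\<bar> ^ r)"
        by (simp only: norm_mult norm_of_real abs_mult power_abs abs_inverse mult_ac)
      have "\<bar>t\<bar>^n * inverse \<bar>t\<bar> ^ p * \<bar>ln \<bar>t\<bar>\<bar> ^ r \<le> real r ^ r + 1"
        using hc[OF False]
      proof
        assume pn: "p < n"
        have "\<bar>t\<bar>^n * inverse \<bar>t\<bar> ^ p = \<bar>t\<bar>^(n - p)"
          using pn t by (simp add: power_diff field_simps)
        also have "\<dots> \<le> \<bar>t\<bar>" using pn t by (metis One_nat_def Suc_leI zero_less_diff power_decreasing power_one_right abs_ge_zero)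
        finally have "\<bar>t\<bar>^n * inverse \<bar>t\<bar> ^ p * \<bar>ln \<bar>t\<bar>\<bar> ^ r \<le> \<bar>t\<bar> * \<bar>ln \<bar>t\<bar>\<bar> ^ r"
          by (rule mult_right_mono) simp
        also have "\<dots> \<le> real r ^ r" by (rule abs_times_abs_ln_pow_le[OF t])
        finally show ?thesis by simp
      next
        assume "p = n \<and> r = 0"
        then show ?thesis using t by (simp add: power_inverse)
      qed
      then show ?thesis unfolding eq by (intro mult_left_mono) simp_all
    qed
    have "\<bar>t\<bar>^n * norm (log_laurent ((c,p,r)#ps) t) \<le> \<bar>t\<bar>^n * norm (c * complex_of_real (inverse t ^ p * ln \<bar>t\<bar> ^ r)) + \<bar>t\<bar>^n * norm (log_laurent ps t)"
      by (simp add: distrib_left[symmetric] mult_left_mono norm_triangle_ineq)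
    also have "\<dots> \<le> norm c * (real r ^ r + 1) + C" using T C[of t] t by simp
    finally show ?thesis .
  qed
  then show ?case by blast
qed

definition pole_order_le :: "nat \<Rightarrow> (complex \<times> nat \<times> nat) list \<Rightarrow> bool" where
  "pole_order_le m ps \<longleftrightarrow> (\<forall>(c,p,r)\<in>set ps. c \<noteq> 0 \<longrightarrow> p \<le> m - 1 \<and> (p = m - 1 \<longrightarrow> r \<le> (if m = 1 then 1 else 0)))"

lemma set_log_laurent_deriv: "x \<in> set (log_laurent_deriv ps) \<Longrightarrow> \<exists>c p r. (c,p,r) \<in> set ps \<and> (x = (c * of_nat r, Suc p, r - 1) \<or> x = (- c * of_nat p, Suc p, r))"
  by (induction ps rule: log_laurent_deriv.induct) auto

lemma set_phase_step: "x \<in> set (phase_step a b ps) \<Longrightarrow> \<exists>c p r. (c,p,r) \<in> set ps \<and> (x = (\<i> * of_real (a + b) * c, p, r) \<or> x = (\<i> * of_real b * c, p, Suc r))"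
  by (induction ps rule: log_laurent_deriv.induct) auto

lemma pole_order_phase_coeff: "1 \<le> m \<Longrightarrow> pole_order_le m (phase_coeff a b m)"
proof (induction m rule: dec_induct)
  case base
  then show ?case by (simp add: pole_order_le_def)
next
  case (step m)
  show ?case unfolding pole_order_le_def
  proof (intro ballI, clarify)
    fix c p r assume mem: "(c, p, r) \<in> set (phase_coeff a b (Suc m))" and c: "c \<noteq> 0"
    from mem consider "(c,p,r) \<in> set (log_laurent_deriv (phase_coeff a b m))" | "(c,p,r) \<in> set (phase_step a b (phase_coeff a b m))" by auto
    then show "p \<le> Suc m - 1 \<and> (p = Suc m - 1 \<longrightarrow> r \<le> (if Suc m = 1 then 1 else 0))"
    proof cases
      case 1
      then obtain c' p' r' where m': "(c',p',r') \<in> set (phase_coeff a b m)" and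
        e: "(c,p,r) = (c' * of_nat r', Suc p', r' - 1) \<or> (c,p,r) = (- c' * of_nat p', Suc p', r')"
        using set_log_laurent_deriv by blast
      from e show ?thesis
      proof
        assume e1: "(c,p,r) = (c' * of_nat r', Suc p', r' - 1)"
        then have "c' \<noteq> 0" "r' \<noteq> 0" using c by auto
        then have i: "p' \<le> m - 1 \<and> (p' = m - 1 \<longrightarrow> r' \<le> (if m = 1 then 1 else 0))"
          using step.IH m' unfolding pole_order_le_def by fastforce
        then show ?thesis using e1 step.hyps \<open>r' \<noteq> 0\<close> by (cases "m = 1") auto
      next
        assume e1: "(c,p,r) = (- c' * of_nat p', Suc p', r')"
        then have "c' \<noteq> 0" "p' \<noteq> 0" using c by auto
        then have i: "p' \<le> m - 1 \<and> (p' = m - 1 \<longrightarrow> r' \<le> (if m = 1 then 1 else 0))"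
          using step.IH m' unfolding pole_order_le_def by fastforce
        then show ?thesis using e1 step.hyps \<open>p' \<noteq> 0\<close> by (cases "m = 1") auto
      qed
    next
      case 2
      then obtain c' p' r' where m': "(c',p',r') \<in> set (phase_coeff a b m)" and
        e: "(c,p,r) = (\<i> * of_real (a + b) * c', p', r') \<or> (c,p,r) = (\<i> * of_real b * c', p', Suc r')"
        using set_phase_step by blast
      then have "c' \<noteq> 0" using c by auto
      then have i: "p' \<le> m - 1" using step.IH m' unfolding pole_order_le_def by fastforce
      then show ?thesis using e step.hyps by auto
    qed
  qed
qed

lemma phase_coeff_times_pow_bounded:
  assumes "2 \<le> m"
  shows "\<exists>C. \<forall>t::real. 0 < \<bar>t\<bar> \<and> \<bar>t\<bar> \<le> 1 \<longrightarrow> \<bar>t\<bar>^(m - 1) * norm (log_laurent (phase_coeff a b m) t) \<le> C"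
proof (rule log_laurent_times_pow_bounded)
  have "pole_order_le m (phase_coeff a b m)" using assms by (intro pole_order_phase_coeff) simp
  then show "\<forall>(c,p,r)\<in>set (phase_coeff a b m). c \<noteq> 0 \<longrightarrow> p < m - 1 \<or> (p = m - 1 \<and> r = 0)"
    using assms unfolding pole_order_le_def by fastforce
qed

lemma log_laurent_pole_bound:
  "\<exists>C K. \<forall>t::real. 0 < \<bar>t\<bar> \<and> \<bar>t\<bar> \<le> 1 \<longrightarrow> norm (log_laurent ps t) \<le> C * inverse \<bar>t\<bar> ^ K"
proof -
  obtain K where K: "fst ` snd ` set ps \<subseteq> {..<K}"
    using finite_nat_bounded[of "fst ` snd ` set ps"] by blast
  have "p < K" if "(c, p, r) \<in> set ps" for c p r
    using K that by (metis fst_conv snd_conv image_eqI lessThan_iff subsetD)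
  then obtain C where C: "\<And>t::real. 0 < \<bar>t\<bar> \<and> \<bar>t\<bar> \<le> 1 \<Longrightarrow> \<bar>t\<bar>^K * norm (log_laurent ps t) \<le> C"
    using log_laurent_times_pow_bounded[of ps K] by blast
  have "norm (log_laurent ps t) \<le> C * inverse \<bar>t\<bar> ^ K" if "0 < \<bar>t\<bar>" "\<bar>t\<bar> \<le> 1" for t :: real
    using C[of t] that by (simp add: power_inverse divide_inverse[symmetric] pos_le_divide_eq mult.commute)
  then show ?thesis by blast
qed

section \<open>Flatness forced by the logarithmic phase\<close>

lemma tendsto_0_of_norm_times_ln_bounded:
  fixes h :: "real \<Rightarrow> 'b::real_normed_vector"
  assumes B: "\<And>t. t \<in> S \<Longrightarrow> norm (h t) * \<bar>1 + ln \<bar>t\<bar>\<bar> \<le> R"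
  shows "(h \<longlongrightarrow> 0) (at 0 within S)"
proof (rule Lim_null_comparison)
  have ln_less: "ln \<bar>t\<bar> < c" if "t \<noteq> 0 \<and> dist t (0::real) < exp c" for t c :: real
    using ln_less_cancel_iff[of "\<bar>t\<bar>" "exp c"] that by (simp add: dist_real_def)
  have "((\<lambda>t. inverse \<bar>1 + ln \<bar>t\<bar>\<bar>) \<longlongrightarrow> 0) (at 0 within S)"
    unfolding tendsto_iff
  proof (intro allI impI)
    fix e :: real assume e: "e > 0"
    show "eventually (\<lambda>t. dist (inverse \<bar>1 + ln \<bar>t\<bar>\<bar>) 0 < e) (at 0 within S)"
      unfolding eventually_at
    proof (intro exI[of _ "exp (- inverse e - 1)"] conjI ballI impI)
      fix t :: real assume "t \<noteq> 0 \<and> dist t 0 < exp (- inverse e - 1)"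
      then have "inverse e < \<bar>1 + ln \<bar>t\<bar>\<bar>" using ln_less by fastforce
      then show "dist (inverse \<bar>1 + ln \<bar>t\<bar>\<bar>) 0 < e"
        using less_imp_inverse_less[of "inverse e"] e by simp
    qed simp
  qed
  then show "((\<lambda>t. R * inverse \<bar>1 + ln \<bar>t\<bar>\<bar>) \<longlongrightarrow> 0) (at 0 within S)"
    by (rule tendsto_mult_right_zero)
  show "eventually (\<lambda>t. norm (h t) \<le> R * inverse \<bar>1 + ln \<bar>t\<bar>\<bar>) (at 0 within S)"
    unfolding eventually_at
  proof (intro exI[of _ "exp (-1)"] conjI ballI impI)
    fix t assume t: "t \<in> S" "t \<noteq> 0 \<and> dist t 0 < exp (- 1)"
    then have "0 < \<bar>1 + ln \<bar>t\<bar>\<bar>" using ln_less[of t "-1"] by simp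
    then show "norm (h t) \<le> R * inverse \<bar>1 + ln \<bar>t\<bar>\<bar>"
      using B[OF t(1)] by (simp add: field_simps)
  qed simp
qed

lemma nth_vderiv_mult_top_terms:
  fixes f V :: "real \<Rightarrow> complex"
  assumes S: "open S" and f: "infinitely_differentiable_on S f" and V: "infinitely_differentiable_on S V"
    and t: "t \<in> S"
  shows "of_nat (Suc n) * nth_vderiv n f t * nth_vderiv 1 V t =
     nth_vderiv (Suc n) (\<lambda>u. f u * V u) t - nth_vderiv (Suc n) f t * V t -
     (\<Sum>i<n. of_nat (Suc n choose i) * nth_vderiv i f t * nth_vderiv (Suc n - i) V t)"
proof -
  have "{0..Suc n} = insert (Suc n) (insert n {..<n})" by auto
  then show ?thesis using nth_vderiv_mult(1)[OF S f V t, of "Suc n"] by (simp add: algebra_simps)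
qed

lemma norm_leibniz_lower_terms_log_phase_le:
  fixes f :: "real \<Rightarrow> complex"
  assumes I: "open I" "0 \<notin> I" and t: "t \<in> I" "\<bar>t\<bar> \<le> 1" and M: "0 \<le> M"
   and low: "\<And>i. i < n \<Longrightarrow> norm (nth_vderiv i f t) \<le> M * \<bar>t\<bar>^(n - i)"
   and C: "\<And>m. 2 \<le> m \<Longrightarrow> \<bar>t\<bar>^(m - 1) * norm (log_laurent (phase_coeff 0 lam m) t) \<le> C m"
  shows "norm (\<Sum>i<n. of_nat (Suc n choose i) * nth_vderiv i f t * nth_vderiv (Suc n - i) (log_phase 0 lam) t)
     \<le> (\<Sum>i<n. of_nat (Suc n choose i) * M * C (Suc n - i))"
proof (rule order_trans[OF norm_sum sum_mono])
  fix i assume i: "i \<in> {..<n}"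
  have eq: "Suc n - i - 1 = n - i" using i by auto
  have "norm (of_nat (Suc n choose i) * nth_vderiv i f t * nth_vderiv (Suc n - i) (log_phase 0 lam) t)
      = of_nat (Suc n choose i) * (norm (nth_vderiv i f t) * norm (log_laurent (phase_coeff 0 lam (Suc n - i)) t))"
    using nth_vderiv_log_phase(1)[OF I t(1)] by (simp add: norm_mult)
  also have "\<dots> \<le> of_nat (Suc n choose i) * (M * (\<bar>t\<bar>^(Suc n - i - 1) * norm (log_laurent (phase_coeff 0 lam (Suc n - i)) t)))"
    using low[of i] i by (auto simp: eq mult.assoc[symmetric] intro!: mult_left_mono mult_right_mono)
  also have "\<dots> \<le> of_nat (Suc n choose i) * (M * C (Suc n - i))"
    using C[of "Suc n - i"] i M by (auto intro!: mult_left_mono)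
  finally show "norm (of_nat (Suc n choose i) * nth_vderiv i f t * nth_vderiv (Suc n - i) (log_phase 0 lam) t)
      \<le> of_nat (Suc n choose i) * M * C (Suc n - i)" by (simp add: mult.assoc)
qed

lemma norm_nth_vderiv_times_log_le:
  fixes f g :: "real \<Rightarrow> complex"
  assumes I: "open I" "0 \<notin> I" and f: "infinitely_differentiable_on I f"
    and g: "\<And>u. u \<in> I \<Longrightarrow> g u = f u * log_phase 0 lam u"
    and t: "t \<in> I" "\<bar>t\<bar> \<le> 1" and M: "0 \<le> M"
    and low: "\<And>i. i < n \<Longrightarrow> norm (nth_vderiv i f t) \<le> M * \<bar>t\<bar>^(n - i)"
    and C: "\<And>m. 2 \<le> m \<Longrightarrow> \<bar>t\<bar>^(m - 1) * norm (log_laurent (phase_coeff 0 lam m) t) \<le> C m"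
  shows "norm (nth_vderiv n f t) * (real (Suc n) * \<bar>lam\<bar> * \<bar>1 + ln \<bar>t\<bar>\<bar>) \<le>
    norm (nth_vderiv (Suc n) g t) + norm (nth_vderiv (Suc n) f t) +
    (\<Sum>i<n. of_nat (Suc n choose i) * M * C (Suc n - i))"
proof -
  define V where "V = log_phase 0 lam"
  have V: "infinitely_differentiable_on I V" unfolding V_def by (rule infinitely_differentiable_on_log_phase[OF I])
  have "nth_vderiv (Suc n) g t = nth_vderiv (Suc n) (\<lambda>u. f u * V u) t"
    using g unfolding V_def by (rule nth_vderiv_cong_open[OF I(1) _ t(1)])
  then have eq: "of_nat (Suc n) * nth_vderiv n f t * nth_vderiv 1 V t =
     nth_vderiv (Suc n) g t - nth_vderiv (Suc n) f t * V t -
     (\<Sum>i<n. of_nat (Suc n choose i) * nth_vderiv i f t * nth_vderiv (Suc n - i) V t)"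
    using nth_vderiv_mult_top_terms[OF I(1) f V t(1)] by simp
  have "nth_vderiv 1 V t = \<i> * of_real (lam * (1 + ln \<bar>t\<bar>)) * V t"
    unfolding V_def using nth_vderiv_log_phase(1)[OF I t(1), of 1 0 lam]
    by (simp add: log_laurent_phase_coeff_1 algebra_simps)
  then have "norm (nth_vderiv n f t) * (real (Suc n) * \<bar>lam\<bar> * \<bar>1 + ln \<bar>t\<bar>\<bar>) =
      norm (of_nat (Suc n) * nth_vderiv n f t * nth_vderiv 1 V t)"
    unfolding V_def by (simp add: norm_mult abs_mult norm_of_real del: of_real_add of_real_mult of_nat_Suc)
  also have "\<dots> \<le> norm (nth_vderiv (Suc n) g t) + norm (nth_vderiv (Suc n) f t * V t) +
      norm (\<Sum>i<n. of_nat (Suc n choose i) * nth_vderiv i f t * nth_vderiv (Suc n - i) V t)"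
    unfolding eq by (rule order_trans[OF norm_triangle_ineq4 add_mono[OF norm_triangle_ineq4 order_refl]])
  also have "\<dots> \<le> norm (nth_vderiv (Suc n) g t) + norm (nth_vderiv (Suc n) f t) +
      (\<Sum>i<n. of_nat (Suc n choose i) * M * C (Suc n - i))"
    unfolding V_def using t M low C
    by (intro add_mono norm_leibniz_lower_terms_log_phase_le[OF I t]) (auto simp: norm_mult)
  finally show ?thesis .
qed

text \<open>Why \<open>f\<close> must be flat: once the lower derivatives of \<open>f\<close> vanish to the right order at \<open>0\<close>,
  the only unbounded term in the Leibniz expansion of \<open>nth_vderiv (n + 1) g\<close> is
  \<open>(n + 1) \<cdot> nth_vderiv n f t \<cdot> \<i>\<lambda>(1 + ln \<bar>t\<bar>)\<close>, so \<open>nth_vderiv n f t = O(1 / ln \<bar>t\<bar>)\<close>.\<close>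

lemma flat_if_times_log_phase_smooth:
  fixes f g :: "real \<Rightarrow> complex"
  assumes J: "open J" "0 \<in> J" and S: "one_sided_interval S \<delta>" "S \<subseteq> J"
   and f: "infinitely_differentiable_on J f" and g: "infinitely_differentiable_on J g"
   and rel: "\<And>t. t \<in> S \<Longrightarrow> g t = f t * log_phase 0 lam t"
   and lam: "lam \<noteq> 0"
  shows "(nth_vderiv n f \<longlongrightarrow> 0) (at 0 within S)"
proof (induction n rule: less_induct)
  case (less n)
  obtain M1 d1 where d1: "d1 > 0" "\<And>t. \<bar>t - 0\<bar> < d1 \<Longrightarrow> norm (nth_vderiv n f t) \<le> M1"
    using isCont_locally_bounded[OF infinitely_differentiable_on_isCont[OF f J(2)]] by blast
  obtain M2 d2 where d2: "d2 > 0" "\<And>t. \<bar>t - 0\<bar> < d2 \<Longrightarrow> norm (nth_vderiv (Suc n) f t) \<le> M2"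
    using isCont_locally_bounded[OF infinitely_differentiable_on_isCont[OF f J(2)]] by blast
  obtain M3 d3 where d3: "d3 > 0" "\<And>t. \<bar>t - 0\<bar> < d3 \<Longrightarrow> norm (nth_vderiv (Suc n) g t) \<le> M3"
    using isCont_locally_bounded[OF infinitely_differentiable_on_isCont[OF g J(2)]] by blast
  obtain C where C: "\<And>m t. 2 \<le> m \<Longrightarrow> 0 < \<bar>t\<bar> \<Longrightarrow> \<bar>t\<bar> \<le> 1 \<Longrightarrow>
      \<bar>t\<bar>^(m - 1) * norm (log_laurent (phase_coeff 0 lam m) t) \<le> C m"
  proof -
    have "\<forall>m. \<exists>C. 2 \<le> m \<longrightarrow> (\<forall>t::real. 0 < \<bar>t\<bar> \<and> \<bar>t\<bar> \<le> 1 \<longrightarrow>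
        \<bar>t\<bar>^(m - 1) * norm (log_laurent (phase_coeff 0 lam m) t) \<le> C)"
      using phase_coeff_times_pow_bounded by blast
    then show ?thesis using that by metis
  qed
  define d where "d = min (min d1 d2) (min d3 1)"
  have d: "d > 0" using d1 d2 d3 by (simp add: d_def)
  define S' where "S' = S \<inter> {-d<..<d}"
  have S': "one_sided_interval S' (min \<delta> d)" unfolding S'_def by (rule one_sided_interval_restrict[OF S(1) d])
  have S'S: "S' \<subseteq> S" and S'J: "S' \<subseteq> J" using S(2) unfolding S'_def by auto
  have oS': "open S'" and nz: "0 \<notin> S'"
    using one_sided_interval_open[OF S'] one_sided_interval_memD[OF S'] by blast+
  have small: "0 < \<bar>t\<bar> \<and> \<bar>t\<bar> < d1 \<and> \<bar>t\<bar> < d2 \<and> \<bar>t\<bar> < d3 \<and> \<bar>t\<bar> \<le> 1" if "t \<in> S'" for t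
    using that one_sided_interval_memD[OF S(1)] unfolding S'_def d_def by auto
  have M1: "0 \<le> M1" using d1(2)[of 0] d1(1) by (simp add: order_trans[OF norm_ge_zero])
  have low: "norm (nth_vderiv k f t) \<le> M1 * \<bar>t\<bar>^(n - k)" if "k \<le> n" "t \<in> S'" for k t
  proof (rule norm_iterated_derivative_le_pow[OF S', of "\<lambda>k. nth_vderiv k f" n M1 k t])
    show "(nth_vderiv j f has_vector_derivative nth_vderiv (Suc j) f u) (at u)" if "u \<in> S'" for j u
      using infinitely_differentiable_on_has_vector_derivative[OF f] that S'J by blast
    show "(nth_vderiv j f \<longlongrightarrow> 0) (at 0 within S')" if "j < n" for j
      using less.IH[OF that] S'S by (rule tendsto_within_subset)
    show "norm (nth_vderiv n f u) \<le> M1" if "u \<in> S'" for u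
      using d1(2)[of u] small[OF that] by simp
  qed (use that in auto)
  define L where "L = (\<Sum>i<n. of_nat (Suc n choose i) * M1 * C (Suc n - i))"
  have "norm (nth_vderiv n f t) * \<bar>1 + ln \<bar>t\<bar>\<bar> \<le> (M3 + M2 + L) / (real (Suc n) * \<bar>lam\<bar>)" if t: "t \<in> S'" for t
  proof -
    have "norm (nth_vderiv n f t) * (real (Suc n) * \<bar>lam\<bar> * \<bar>1 + ln \<bar>t\<bar>\<bar>) \<le>
        norm (nth_vderiv (Suc n) g t) + norm (nth_vderiv (Suc n) f t) + L"
      unfolding L_def using rel S'S small[OF t] low[of _ t] t M1 C
      by (intro norm_nth_vderiv_times_log_le[OF oS' nz infinitely_differentiable_on_subset[OF f S'J] _ t]) auto
    also have "\<dots> \<le> M3 + M2 + L" using d2(2)[of t] d3(2)[of t] small[OF t] by simp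
    finally have "(norm (nth_vderiv n f t) * \<bar>1 + ln \<bar>t\<bar>\<bar>) * (real (Suc n) * \<bar>lam\<bar>) \<le> M3 + M2 + L"
      by (simp only: mult_ac)
    then show ?thesis using lam by (simp add: pos_le_divide_eq del: of_nat_Suc)
  qed
  then have "(nth_vderiv n f \<longlongrightarrow> 0) (at 0 within S')"
    by (rule tendsto_0_of_norm_times_ln_bounded)
  moreover have "at 0 within S' = at 0 within S"
    unfolding S'_def by (rule at_within_nhd[of _ "{-d<..<d}"]) (use d in auto)
  ultimately show ?case by simp
qed

lemma flat_times_nth_vderiv_log_phase_bound:
  fixes C :: "real \<Rightarrow> complex"
  assumes S: "one_sided_interval S \<delta>" and C: "infinitely_differentiable_on S C"
   and limC: "\<And>k. (nth_vderiv k C \<longlongrightarrow> 0) (at 0 within S)"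
  shows "\<exists>K. eventually (\<lambda>t. t \<in> S \<and>
    norm (nth_vderiv i C t * nth_vderiv k (log_phase 0 \<mu>) t) \<le> K * \<bar>t\<bar>) (at 0 within S)"
proof -
  have oS: "open S" and nz: "0 \<notin> S"
    using one_sided_interval_open[OF S] one_sided_interval_memD[OF S] by blast+
  obtain K L where KL: "\<And>t::real. 0 < \<bar>t\<bar> \<Longrightarrow> \<bar>t\<bar> \<le> 1 \<Longrightarrow>
      norm (log_laurent (phase_coeff 0 \<mu> k) t) \<le> K * inverse \<bar>t\<bar> ^ L"
    using log_laurent_pole_bound by blast
  obtain d where d: "d > 0" "\<And>t. t \<in> S \<Longrightarrow> \<bar>t\<bar> < d \<Longrightarrow> norm (nth_vderiv i C t) \<le> \<bar>t\<bar>^Suc L"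
    using flat_imp_norm_le_pow[OF S C limC, of i "Suc L"] by blast
  have "norm (nth_vderiv i C t * nth_vderiv k (log_phase 0 \<mu>) t) \<le> K * \<bar>t\<bar>"
    if t: "t \<in> S" "t \<noteq> 0" "\<bar>t\<bar> < min d 1" for t
  proof -
    have "norm (nth_vderiv i C t * nth_vderiv k (log_phase 0 \<mu>) t) =
        norm (nth_vderiv i C t) * norm (log_laurent (phase_coeff 0 \<mu> k) t)"
      using nth_vderiv_log_phase(1)[OF oS nz t(1)] by (simp add: norm_mult)
    also have "\<dots> \<le> \<bar>t\<bar>^Suc L * (K * inverse \<bar>t\<bar> ^ L)"
      using t by (intro mult_mono d(2) KL) auto
    also have "\<dots> = K * \<bar>t\<bar>" using t by (simp add: power_inverse field_simps)
    finally show ?thesis .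
  qed
  then show ?thesis
    unfolding eventually_at using d(1) by (intro exI[of _ K] exI[of _ "min d 1"]) auto
qed

lemma flat_times_log_phase:
  fixes C a :: "real \<Rightarrow> complex"
  assumes S: "one_sided_interval S \<delta>" and C: "infinitely_differentiable_on S C"
   and limC: "\<And>k. (nth_vderiv k C \<longlongrightarrow> 0) (at 0 within S)"
   and a: "\<And>t. t \<in> S \<Longrightarrow> a t = C t * log_phase 0 \<mu> t"
  shows "(nth_vderiv n a \<longlongrightarrow> 0) (at 0 within S)"
proof -
  have oS: "open S" and nz: "0 \<notin> S"
    using one_sided_interval_open[OF S] one_sided_interval_memD[OF S] by blast+
  obtain K where K: "\<And>i. eventually (\<lambda>t. t \<in> S \<and>
      norm (nth_vderiv i C t * nth_vderiv (n - i) (log_phase 0 \<mu>) t) \<le> K i * \<bar>t\<bar>) (at 0 within S)"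
  proof -
    have "\<forall>i. \<exists>K. eventually (\<lambda>t. t \<in> S \<and>
        norm (nth_vderiv i C t * nth_vderiv (n - i) (log_phase 0 \<mu>) t) \<le> K * \<bar>t\<bar>) (at 0 within S)"
      using flat_times_nth_vderiv_log_phase_bound[OF S C limC] by blast
    then show ?thesis using that by (auto dest!: choice)
  qed
  define B where "B = (\<Sum>i = 0..n. of_nat (n choose i) * K i)"
  have "eventually (\<lambda>t. \<forall>i\<in>{0..n}. t \<in> S \<and>
      norm (nth_vderiv i C t * nth_vderiv (n - i) (log_phase 0 \<mu>) t) \<le> K i * \<bar>t\<bar>) (at 0 within S)"
    by (rule eventually_ball_finite) (use K in simp_all)
  then have "eventually (\<lambda>t. norm (nth_vderiv n a t) \<le> B * \<bar>t\<bar>) (at 0 within S)"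
  proof (rule eventually_mono)
    fix t assume t: "\<forall>i\<in>{0..n}. t \<in> S \<and>
      norm (nth_vderiv i C t * nth_vderiv (n - i) (log_phase 0 \<mu>) t) \<le> K i * \<bar>t\<bar>"
    then have tS: "t \<in> S" by auto
    have "nth_vderiv n a t = nth_vderiv n (\<lambda>t. C t * log_phase 0 \<mu> t) t"
      by (rule nth_vderiv_cong_open[OF oS a tS])
    also have "\<dots> = (\<Sum>i = 0..n. of_nat (n choose i) * (nth_vderiv i C t * nth_vderiv (n - i) (log_phase 0 \<mu>) t))"
      using nth_vderiv_mult(1)[OF oS C infinitely_differentiable_on_log_phase[OF oS nz] tS]
      by (simp add: mult.assoc)
    finally have "norm (nth_vderiv n a t) \<le> (\<Sum>i = 0..n. of_nat (n choose i) *
        norm (nth_vderiv i C t * nth_vderiv (n - i) (log_phase 0 \<mu>) t))"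
      by (simp only:) (rule order_trans[OF norm_sum], simp add: norm_mult)
    also have "\<dots> \<le> (\<Sum>i = 0..n. of_nat (n choose i) * (K i * \<bar>t\<bar>))"
      using t by (intro sum_mono mult_left_mono; simp)
    finally show "norm (nth_vderiv n a t) \<le> B * \<bar>t\<bar>"
      unfolding B_def by (simp add: sum_distrib_right mult.assoc)
  qed
  moreover have "((\<lambda>t. B * \<bar>t\<bar>) \<longlongrightarrow> 0) (at 0 within S)"
    using tendsto_mult_right_zero[OF tendsto_rabs_zero[OF tendsto_ident_at]] by simp
  ultimately show ?thesis by (rule Lim_null_comparison)
qed

section \<open>Leafwise flat sections on a quadrant\<close>

fun iterated_directional_derivative ::
  "('a::real_normed_vector \<Rightarrow> 'b::real_normed_vector) \<Rightarrow> 'a \<Rightarrow> nat \<Rightarrow> 'a \<Rightarrow> 'b" where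
  "iterated_directional_derivative \<sigma> w 0 = \<sigma>"
| "iterated_directional_derivative \<sigma> w (Suc n) =
     (\<lambda>z. frechet_derivative (iterated_directional_derivative \<sigma> w n) (at z) w)"

lemma smooth_on_iterated_directional_derivative:
  "smooth_on Z \<sigma> \<Longrightarrow> smooth_on Z (iterated_directional_derivative \<sigma> w n)"
  by (induction n) (auto intro: smooth_on_frechet_derivative)

lemma has_vector_derivative_compose_affine:
  fixes g :: "'a::real_normed_vector \<Rightarrow> 'b::real_normed_vector"
  assumes "g differentiable (at (z0 + t *\<^sub>R w))"
  shows "((\<lambda>t. g (z0 + t *\<^sub>R w)) has_vector_derivative frechet_derivative g (at (z0 + t *\<^sub>R w)) w) (at t)"
proof -
  let ?D = "frechet_derivative g (at (z0 + t *\<^sub>R w))"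
  have g: "(g has_derivative ?D) (at (z0 + t *\<^sub>R w))" using assms frechet_derivative_works by blast
  have "((\<lambda>t. z0 + t *\<^sub>R w) has_derivative (\<lambda>h. h *\<^sub>R w)) (at t)"
    by (auto intro!: derivative_eq_intros)
  from has_derivative_compose[OF this g]
  have "((\<lambda>t. g (z0 + t *\<^sub>R w)) has_derivative (\<lambda>h. ?D (h *\<^sub>R w))) (at t)" .
  moreover have "(\<lambda>h. ?D (h *\<^sub>R w)) = (\<lambda>h. h *\<^sub>R ?D w)"
    using linear_scale[OF has_derivative_linear[OF g]] by auto
  ultimately show ?thesis unfolding has_vector_derivative_def by simp
qed

lemma infinitely_differentiable_on_compose_affine:
  fixes \<sigma> :: "'a::real_normed_vector \<Rightarrow> 'b::real_normed_vector"
  assumes \<sigma>: "smooth_on Z \<sigma>" and I: "open I" and mem: "\<And>t. t \<in> I \<Longrightarrow> z0 + t *\<^sub>R w \<in> Z"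
  shows "infinitely_differentiable_on I (\<lambda>t. \<sigma> (z0 + t *\<^sub>R w))"
proof (rule infinitely_differentiable_on_derivative_sequence[OF I,
      where F="\<lambda>n t. iterated_directional_derivative \<sigma> w n (z0 + t *\<^sub>R w)"])
  fix n t assume "t \<in> I"
  show "((\<lambda>t. iterated_directional_derivative \<sigma> w n (z0 + t *\<^sub>R w)) has_vector_derivative
      iterated_directional_derivative \<sigma> w (Suc n) (z0 + t *\<^sub>R w)) (at t)"
    using has_vector_derivative_compose_affine[OF smooth_on_differentiable[OF
        smooth_on_iterated_directional_derivative[OF \<sigma>] mem[OF \<open>t \<in> I\<close>]]] by simp
qed simp

lemma leafwise_flat_derivative_along_leaf:
  assumes "leafwise_flat Z \<sigma>" "(x, y) \<in> Z"
  shows "frechet_derivative \<sigma> (at (x, y)) (x, - y) = - \<i> * of_real (x * y) * \<sigma> (x, y)"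
proof -
  have "nabla \<sigma> (x, y) (1 *\<^sub>R leaf_field (x, y)) = 0"
    using assms unfolding leafwise_flat_def by blast
  then show ?thesis unfolding nabla_def leaf_field_def Theta_def
    by (simp add: algebra_simps eq_neg_iff_add_eq_0)
qed

text \<open>\<open>\<sigma>\<close> along the leaf \<open>xy = t\<close>, parametrised by \<open>u = x\<close>, divided by \<open>model_phase u (t / u)\<close>.\<close>

definition leaf_amplitude :: "(real \<times> real \<Rightarrow> complex) \<Rightarrow> real \<Rightarrow> real \<Rightarrow> complex" where
  "leaf_amplitude \<sigma> t u = \<sigma> (u, t / u) * exp (\<i> * of_real (t * ln \<bar>u\<bar> - t / 2 * ln \<bar>t\<bar>))"

lemma eq_leaf_amplitude_times_model_phase:
  assumes "x \<noteq> 0" "y \<noteq> 0"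
  shows "\<sigma> (x, y) = leaf_amplitude \<sigma> (x * y) x * model_phase x y"
proof -
  have "ln \<bar>x / y\<bar> = 2 * ln \<bar>x\<bar> - ln \<bar>x * y\<bar>"
    using assms by (simp add: abs_divide abs_mult ln_div ln_mult)
  then have "x * y * ln \<bar>x / y\<bar> = x * y * (2 * ln \<bar>x\<bar> - ln \<bar>x * y\<bar>)"
    by (simp only:)
  also have "\<dots> = 2 * (x * y * ln \<bar>x\<bar> - x * y / 2 * ln \<bar>x * y\<bar>)"
    by (simp add: algebra_simps)
  finally have "x * y * ln \<bar>x / y\<bar> = 2 * (x * y * ln \<bar>x\<bar> - x * y / 2 * ln \<bar>x * y\<bar>)" .
  then have "model_phase x y = exp (- (\<i> / 2) * of_real (2 * (x * y * ln \<bar>x\<bar> - x * y / 2 * ln \<bar>x * y\<bar>)))"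
    unfolding model_phase_def by (rule arg_cong)
  also have "\<dots> = exp (- (\<i> * of_real (x * y * ln \<bar>x\<bar> - x * y / 2 * ln \<bar>x * y\<bar>)))"
    by (rule arg_cong[where f=exp]) (simp only: of_real_mult of_real_numeral, simp)
  finally show ?thesis unfolding leaf_amplitude_def using assms
    by (simp add: exp_minus field_simps)
qed

lemma leaf_amplitude_has_vector_derivative_0:
  assumes \<sigma>: "smooth_on Z \<sigma>" and lf: "leafwise_flat Z \<sigma>" and u: "u \<noteq> 0" and mem: "(u, t / u) \<in> Z"
  shows "(leaf_amplitude \<sigma> t has_vector_derivative 0) (at u)"
proof -
  let ?z = "(u, t / u)"
  let ?D = "frechet_derivative \<sigma> (at ?z)"
  have D: "(\<sigma> has_derivative ?D) (at ?z)" by (rule smooth_on_has_derivative[OF \<sigma> mem])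
  have "((\<lambda>u. (u, t / u)) has_derivative (\<lambda>h. (h, h * (- t / u^2)))) (at u)"
    using u by (auto intro!: derivative_eq_intros simp: power2_eq_square field_simps)
  then have "((\<lambda>u. (u, t / u)) has_derivative (\<lambda>h. (h / u) *\<^sub>R (u, - (t / u)))) (at u)"
    by (rule has_derivative_eq_rhs) (use u in \<open>auto simp: fun_eq_iff power2_eq_square field_simps\<close>)
  from has_derivative_compose[OF this D]
  have "((\<lambda>u. \<sigma> (u, t / u)) has_derivative (\<lambda>h. (h / u) *\<^sub>R ?D (u, - (t / u)))) (at u)"
    using linear_scale[OF has_derivative_linear[OF D]] by (simp del: scaleR_Pair)
  then have d1: "((\<lambda>u. \<sigma> (u, t / u)) has_vector_derivative (- \<i> * of_real t * \<sigma> ?z / of_real u)) (at u)"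
    using leafwise_flat_derivative_along_leaf[OF lf mem] u unfolding has_vector_derivative_def
    by (simp add: scaleR_conv_of_real divide_inverse mult_ac)
  have "((\<lambda>u. t * ln \<bar>u\<bar> - t / 2 * ln \<bar>t\<bar>) has_real_derivative t * inverse u - 0) (at u)"
    by (intro DERIV_diff DERIV_cmult DERIV_ln_abs[OF u] DERIV_const)
  then have "((\<lambda>u. \<i> * of_real (t * ln \<bar>u\<bar> - t / 2 * ln \<bar>t\<bar>)) has_vector_derivative
      \<i> * of_real (t * inverse u - 0)) (at u)"
    by (intro has_vector_derivative_mult_right has_vector_derivative_of_real)
  from has_vector_derivative_mult[OF d1 has_vector_derivative_exp[OF this]]
  show ?thesis unfolding leaf_amplitude_def using u by (simp add: field_simps)
qed

lemma leaf_segment_in_Zset: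
  assumes m: "(x, y) \<in> Zset \<epsilon> \<eta>" "(x', y') \<in> Zset \<epsilon> \<eta>"
    and t: "x * y = x' * y'" "x * y \<noteq> 0" and s: "x * x' > 0" and u: "u \<in> closed_segment x x'"
  shows "u \<noteq> 0 \<and> (u, x * y / u) \<in> Zset \<epsilon> \<eta>"
proof -
  let ?t = "x * y"
  have b: "\<bar>x\<bar> < \<epsilon>" "\<bar>x'\<bar> < \<epsilon>" "\<bar>y\<bar> < \<epsilon>" "\<bar>y'\<bar> < \<epsilon>" "\<bar>?t\<bar> < \<eta>"
    using m t unfolding Zset_def by auto
  have l1: "\<bar>?t\<bar> < \<bar>x\<bar> * \<epsilon>" using b t(2) by (simp add: abs_mult mult_strict_left_mono)
  have l2: "\<bar>?t\<bar> < \<bar>x'\<bar> * \<epsilon>" using b t by (simp add: abs_mult mult_strict_left_mono)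
  have "u \<noteq> 0 \<and> \<bar>u\<bar> < \<epsilon> \<and> \<bar>?t\<bar> < \<bar>u\<bar> * \<epsilon>"
  proof (cases "0 < x")
    case True
    then have "0 < x'" using s by (simp add: zero_less_mult_iff)
    moreover have "min x x' \<le> u \<and> u \<le> max x x'"
      using u by (auto simp: closed_segment_eq_real_ivl split: if_splits)
    ultimately show ?thesis using True b l1 l2
      by (smt (verit) mult_right_mono)
  next
    case False
    then have "x < 0" "x' < 0" using s by (auto simp: zero_less_mult_iff)
    moreover have "min x x' \<le> u \<and> u \<le> max x x'"
      using u by (auto simp: closed_segment_eq_real_ivl split: if_splits)
    ultimately show ?thesis using b l1 l2
      by (smt (verit) mult_right_mono)
  qed
  then show ?thesis using b unfolding Zset_def by (simp add: abs_divide divide_less_eq mult.commute)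
qed

lemma leaf_amplitude_constant:
  assumes \<sigma>: "smooth_on (Zset \<epsilon> \<eta>) \<sigma>" and lf: "leafwise_flat (Zset \<epsilon> \<eta>) \<sigma>"
    and m: "(x, y) \<in> Zset \<epsilon> \<eta>" "(x', y') \<in> Zset \<epsilon> \<eta>"
    and t: "x * y = x' * y'" "x * y \<noteq> 0" and s: "x * x' > 0"
  shows "leaf_amplitude \<sigma> (x * y) x = leaf_amplitude \<sigma> (x * y) x'"
proof -
  have "\<exists>c. \<forall>u\<in>closed_segment x x'. leaf_amplitude \<sigma> (x * y) u = c"
  proof (rule has_derivative_zero_constant)
    fix u assume "u \<in> closed_segment x x'"
    then have "(leaf_amplitude \<sigma> (x * y) has_vector_derivative 0) (at u)"
      using leaf_segment_in_Zset[OF m t s] leaf_amplitude_has_vector_derivative_0[OF \<sigma> lf] by blast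
    then show "(leaf_amplitude \<sigma> (x * y) has_derivative (\<lambda>h. 0)) (at u within closed_segment x x')"
      unfolding has_vector_derivative_def by (simp add: has_derivative_at_withinI)
  qed simp
  then show ?thesis by auto
qed

lemma Zset_axis_parallel_lines:
  assumes c: "0 < c" "c < \<epsilon>" "\<eta> < c * \<epsilon>" and s: "\<bar>s\<bar> = c" and t: "\<bar>t\<bar> < \<eta>"
  shows "(s, t / s) \<in> Zset \<epsilon> \<eta>" and "(t / s, s) \<in> Zset \<epsilon> \<eta>"
proof -
  have "\<bar>t / s\<bar> < \<epsilon>" using c s t by (simp add: abs_divide divide_less_eq mult.commute)
  moreover have "s \<noteq> 0" using c s by auto
  ultimately show "(s, t / s) \<in> Zset \<epsilon> \<eta>" "(t / s, s) \<in> Zset \<epsilon> \<eta>"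
    using c s t unfolding Zset_def by (auto simp: abs_mult)
qed

lemma flat_if_log_phase_factorisations:
  fixes a B C :: "real \<Rightarrow> complex"
  assumes J: "open J" "0 \<in> J" and I: "one_sided_interval I \<delta>" "I \<subseteq> J"
    and B: "infinitely_differentiable_on J B" and C: "infinitely_differentiable_on J C"
    and aB: "\<And>t. t \<in> I \<Longrightarrow> a t = B t * log_phase \<alpha> (-1/2) t"
    and aC: "\<And>t. t \<in> I \<Longrightarrow> a t = C t * log_phase (- \<alpha>) (1/2) t"
  shows "smooth_on I a \<and> flat_at_0 I a"
proof -
  have oI: "open I" and nzI: "0 \<notin> I"
    using one_sided_interval_open[OF I(1)] one_sided_interval_memD[OF I(1)] by blast+
  define Bt where "Bt t = B t * exp (of_real t * (\<i> * of_real \<alpha>))" for t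
  define Ct where "Ct t = C t * exp (of_real t * (\<i> * of_real (- \<alpha>)))" for t
  have Bt: "infinitely_differentiable_on J Bt" unfolding Bt_def
    by (rule infinitely_differentiable_on_mult[OF J(1) B infinitely_differentiable_on_exp_linear])
  have Ct: "infinitely_differentiable_on J Ct" unfolding Ct_def
    by (rule infinitely_differentiable_on_mult[OF J(1) C infinitely_differentiable_on_exp_linear])
  have aCt: "a t = Ct t * log_phase 0 (1/2) t" if "t \<in> I" for t
    using aC[OF that] unfolding Ct_def by (subst (asm) log_phase_split) (simp add: mult.assoc)
  have aBt: "a t = Bt t * log_phase 0 (-1/2) t" if "t \<in> I" for t
    using aB[OF that] unfolding Bt_def by (subst (asm) log_phase_split) (simp add: mult.assoc)
  have "Bt t = Ct t * log_phase 0 1 t" if t: "t \<in> I" for t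
  proof -
    have "Bt t = Bt t * (log_phase 0 (-1/2) t * log_phase 0 (1/2) t)" by (simp add: log_phase_mult log_phase_0_0)
    also have "\<dots> = Ct t * (log_phase 0 (1/2) t * log_phase 0 (1/2) t)"
      using aBt[OF t] aCt[OF t] by (simp add: mult.assoc)
    also have "\<dots> = Ct t * log_phase 0 1 t" by (simp add: log_phase_mult)
    finally show ?thesis .
  qed
  then have "(nth_vderiv n Ct \<longlongrightarrow> 0) (at 0 within I)" for n
    by (rule flat_if_times_log_phase_smooth[OF J I Ct Bt, where lam=1]) simp_all
  then have "flat_at_0 I a"
    unfolding flat_at_0_def
    by (intro allI flat_times_log_phase[OF I(1) infinitely_differentiable_on_subset[OF Ct I(2)] _ aCt])
  moreover have "smooth_on I (\<lambda>t. B t * log_phase \<alpha> (-1/2) t)"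
    by (intro infinitely_differentiable_on_imp_smooth_on[OF oI] infinitely_differentiable_on_mult[OF oI]
        infinitely_differentiable_on_subset[OF B I(2)] infinitely_differentiable_on_log_phase[OF oI nzI])
  ultimately show ?thesis using smooth_on_cong_open[OF oI aB] by simp
qed

lemma leaf_amplitude_horizontal:
  assumes "t \<noteq> 0" "y0 \<noteq> 0"
  shows "leaf_amplitude \<sigma> t (t / y0) = \<sigma> (t / y0, y0) * log_phase (- ln \<bar>y0\<bar>) (1/2) t"
proof -
  have "t / (t / y0) = y0" using assms by simp
  moreover have "ln \<bar>t / y0\<bar> = ln \<bar>t\<bar> - ln \<bar>y0\<bar>" using assms by (simp add: abs_divide ln_div)
  moreover have "t * (ln \<bar>t\<bar> - ln \<bar>y0\<bar>) - t / 2 * ln \<bar>t\<bar> = - ln \<bar>y0\<bar> * t + 1/2 * (t * ln \<bar>t\<bar>)"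
    by (simp add: algebra_simps)
  ultimately show ?thesis unfolding leaf_amplitude_def log_phase_def
    by (simp del: of_real_add of_real_mult of_real_diff of_real_divide)
qed

lemma leafwise_flat_quadrant_representation:
  fixes \<sigma> :: "real \<times> real \<Rightarrow> complex"
  assumes \<eta>: "0 < \<eta>" "\<eta> < \<epsilon>\<^sup>2" and \<epsilon>: "0 < \<epsilon>"
    and \<sigma>: "smooth_on (Zset \<epsilon> \<eta>) \<sigma>" and lf: "leafwise_flat (Zset \<epsilon> \<eta>) \<sigma>"
    and sx: "\<bar>sx\<bar> = 1" and sy: "\<bar>sy\<bar> = 1"
    and I: "one_sided_interval I \<eta>" and I_iff: "\<And>t. t \<in> I \<longleftrightarrow> 0 < sx * sy * t \<and> \<bar>t\<bar> < \<eta>"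
    and Q_iff: "\<And>x y. (x, y) \<in> Q \<longleftrightarrow> 0 < sx * x \<and> 0 < sy * y"
  shows "\<exists>a. smooth_on I a \<and> flat_at_0 I a \<and>
     (\<forall>x y. (x, y) \<in> Zset \<epsilon> \<eta> \<inter> Q \<longrightarrow> \<sigma> (x, y) = a (x * y) * model_phase x y)"
proof -
  have "\<eta> / \<epsilon> < \<epsilon>" using \<eta> \<epsilon> by (simp add: divide_less_eq power2_eq_square)
  then obtain c where c: "\<eta> / \<epsilon> < c" "c < \<epsilon>" using dense by blast
  then have c': "0 < c" "\<eta> < c * \<epsilon>" using \<eta> \<epsilon> by (auto simp: divide_less_eq order.strict_trans1[of 0 "\<eta>/\<epsilon>"])
  have sx2: "sx * sx = 1" and sy2: "sy * sy = 1"
    using sx sy abs_mult_self_eq[of sx] abs_mult_self_eq[of sy] by simp_all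
  define x0 y0 where "x0 = sx * c" and "y0 = sy * c"
  have x0: "\<bar>x0\<bar> = c" "0 < sx * x0" and y0: "\<bar>y0\<bar> = c" "0 < sy * y0"
    using c' sx sy sx2 sy2 unfolding x0_def y0_def by (auto simp: abs_mult mult.assoc[symmetric])
  define J where "J = {-\<eta><..<\<eta>}"
  have J: "open J" "0 \<in> J" and IJ: "I \<subseteq> J" using \<eta> I_iff unfolding J_def by auto
  have line_mem: "(x0, t / x0) \<in> Zset \<epsilon> \<eta>" "(t / y0, y0) \<in> Zset \<epsilon> \<eta>" if "t \<in> J" for t
    using Zset_axis_parallel_lines[OF c'(1) c(2) c'(2)] x0 y0 that unfolding J_def by auto
  define B where "B t = \<sigma> (x0, t / x0)" for t
  define C where "C t = \<sigma> (t / y0, y0)" for t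
  have "infinitely_differentiable_on J (\<lambda>t. \<sigma> ((x0, 0) + t *\<^sub>R (0, 1 / x0)))"
    by (rule infinitely_differentiable_on_compose_affine[OF \<sigma> J(1)]) (use line_mem in \<open>simp add: divide_inverse\<close>)
  then have B: "infinitely_differentiable_on J B" unfolding B_def by (simp add: divide_inverse)
  have "infinitely_differentiable_on J (\<lambda>t. \<sigma> ((0, y0) + t *\<^sub>R (1 / y0, 0)))"
    by (rule infinitely_differentiable_on_compose_affine[OF \<sigma> J(1)]) (use line_mem in \<open>simp add: divide_inverse\<close>)
  then have C: "infinitely_differentiable_on J C" unfolding C_def by (simp add: divide_inverse)
  define a where "a t = leaf_amplitude \<sigma> t x0" for t
  have aB: "a t = B t * log_phase (ln c) (-1/2) t" for t
    unfolding a_def leaf_amplitude_def B_def log_phase_def using x0 by (simp add: algebra_simps)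
  have aC: "a t = C t * log_phase (- ln c) (1/2) t" if t: "t \<in> I" for t
  proof -
    have t0: "t \<noteq> 0" "t \<in> J" using t IJ one_sided_interval_memD[OF I] by auto
    have "0 < (sx * x0) * (sx * sy * t) / (sy * y0)"
      using x0 y0 t I_iff by (rule_tac divide_pos_pos[OF mult_pos_pos]) auto
    also have "(sx * x0) * (sx * sy * t) / (sy * y0) = (sx * sx) * (x0 * (t / y0))"
      using y0 by (auto simp: field_simps)
    finally have "0 < x0 * (t / y0)" using sx2 by simp
    then have "leaf_amplitude \<sigma> (x0 * (t / x0)) x0 = leaf_amplitude \<sigma> (x0 * (t / x0)) (t / y0)"
      using x0 y0 t0 line_mem[OF t0(2)] by (intro leaf_amplitude_constant[OF \<sigma> lf]) auto
    then have "a t = leaf_amplitude \<sigma> t (t / y0)" unfolding a_def using x0 c' by simp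
    also have "\<dots> = C t * log_phase (- ln c) (1/2) t"
      using leaf_amplitude_horizontal[OF t0(1), of y0 \<sigma>] y0 c' unfolding C_def by auto
    finally show ?thesis .
  qed
  have "\<sigma> (x, y) = a (x * y) * model_phase x y" if xy: "(x, y) \<in> Zset \<epsilon> \<eta>" "(x, y) \<in> Q" for x y
  proof -
    have p: "0 < sx * x" "0 < sy * y" using xy(2) Q_iff by auto
    then have "0 < (sx * x) * (sy * y)" by simp
    then have "x * y \<in> I" using xy(1) I_iff by (simp add: Zset_def mult_ac)
    moreover have "0 < (sx * x) * (sx * x0)" using p x0 by simp
    then have "0 < (sx * sx) * (x * x0)" by (simp only: mult_ac)
    then have "0 < x * x0" using sx2 by simp
    ultimately have "leaf_amplitude \<sigma> (x * y) x = a (x * y)"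
      unfolding a_def using p line_mem IJ x0
      by (intro leaf_amplitude_constant[OF \<sigma> lf xy(1)]) (auto simp: mult.commute)
    moreover have "x \<noteq> 0" "y \<noteq> 0" using p by auto
    ultimately show ?thesis using eq_leaf_amplitude_times_model_phase[of x y \<sigma>] by simp
  qed
  moreover have "smooth_on I a \<and> flat_at_0 I a"
    by (rule flat_if_log_phase_factorisations[OF J I IJ B C aB aC])
  ultimately show ?thesis by blast
qed

section \<open>Smoothness of model sections\<close>

inductive log_rational :: "(real \<times> real \<Rightarrow> real) \<Rightarrow> bool" where
  const: "log_rational (\<lambda>z. c)"
| fst: "log_rational (\<lambda>z. fst z)"
| snd: "log_rational (\<lambda>z. snd z)"
| inverse_fst: "log_rational (\<lambda>z. inverse (fst z))"
| inverse_snd: "log_rational (\<lambda>z. inverse (snd z))"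
| ln_ratio: "log_rational (\<lambda>z. ln \<bar>fst z / snd z\<bar>)"
| add: "log_rational f \<Longrightarrow> log_rational g \<Longrightarrow> log_rational (\<lambda>z. f z + g z)"
| mult: "log_rational f \<Longrightarrow> log_rational g \<Longrightarrow> log_rational (\<lambda>z. f z * g z)"

lemma has_derivative_ln_abs_ratio:
  fixes x y :: real
  assumes "x \<noteq> 0" "y \<noteq> 0"
  shows "((\<lambda>z. ln \<bar>fst z / snd z\<bar>) has_derivative (\<lambda>v. fst v * inverse x + snd v * (- inverse y))) (at (x, y))"
proof -
  have d1: "((\<lambda>z. fst z / snd z) has_derivative (\<lambda>v. (fst v * y - x * snd v) / (y * y))) (at (x, y))"
    using assms by (auto intro!: derivative_eq_intros simp: field_simps power2_eq_square)
  have "fst (x, y) / snd (x, y) \<noteq> 0" using assms by simp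
  then have d2: "((\<lambda>u. ln \<bar>u\<bar>) has_derivative (\<lambda>h. inverse (fst (x, y) / snd (x, y)) * h))
      (at (fst (x, y) / snd (x, y)))"
    using DERIV_ln_abs unfolding has_field_derivative_def by blast
  from has_derivative_compose[OF d1 d2]
  show ?thesis
    by (rule has_derivative_eq_rhs) (use assms in \<open>auto simp: fun_eq_iff field_simps\<close>)
qed

definition has_log_rational_gradient :: "(real \<times> real \<Rightarrow> real) \<Rightarrow> bool" where
  "has_log_rational_gradient m \<longleftrightarrow> (\<exists>mx my. log_rational mx \<and> log_rational my \<and>
     (\<forall>x y. x \<noteq> 0 \<longrightarrow> y \<noteq> 0 \<longrightarrow>
        (m has_derivative (\<lambda>v. fst v * mx (x, y) + snd v * my (x, y))) (at (x, y))))"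

lemma has_log_rational_gradientI:
  assumes "log_rational mx" "log_rational my"
    and "\<And>x y. x \<noteq> 0 \<Longrightarrow> y \<noteq> 0 \<Longrightarrow> (m has_derivative (\<lambda>v. fst v * mx (x, y) + snd v * my (x, y))) (at (x, y))"
  shows "has_log_rational_gradient m"
  using assms unfolding has_log_rational_gradient_def by blast

lemma has_log_rational_gradient_add:
  assumes "has_log_rational_gradient f" "has_log_rational_gradient g"
  shows "has_log_rational_gradient (\<lambda>z. f z + g z)"
proof -
  obtain fx fy gx gy where f: "log_rational fx" "log_rational fy"
      "\<And>x y. x \<noteq> 0 \<Longrightarrow> y \<noteq> 0 \<Longrightarrow> (f has_derivative (\<lambda>v. fst v * fx (x, y) + snd v * fy (x, y))) (at (x, y))"
    and g: "log_rational gx" "log_rational gy"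
      "\<And>x y. x \<noteq> 0 \<Longrightarrow> y \<noteq> 0 \<Longrightarrow> (g has_derivative (\<lambda>v. fst v * gx (x, y) + snd v * gy (x, y))) (at (x, y))"
    using assms unfolding has_log_rational_gradient_def by blast
  show ?thesis
  proof (rule has_log_rational_gradientI[OF log_rational.add[OF f(1) g(1)] log_rational.add[OF f(2) g(2)]])
    fix x y :: real assume "x \<noteq> 0" "y \<noteq> 0"
    from has_derivative_add[OF f(3)[OF this] g(3)[OF this]]
    show "((\<lambda>z. f z + g z) has_derivative
        (\<lambda>v. fst v * (fx (x, y) + gx (x, y)) + snd v * (fy (x, y) + gy (x, y)))) (at (x, y))"
      by (simp add: algebra_simps)
  qed
qed

lemma has_log_rational_gradient_mult:
  assumes "log_rational f" "log_rational g" "has_log_rational_gradient f" "has_log_rational_gradient g"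
  shows "has_log_rational_gradient (\<lambda>z. f z * g z)"
proof -
  obtain fx fy gx gy where f: "log_rational fx" "log_rational fy"
      "\<And>x y. x \<noteq> 0 \<Longrightarrow> y \<noteq> 0 \<Longrightarrow> (f has_derivative (\<lambda>v. fst v * fx (x, y) + snd v * fy (x, y))) (at (x, y))"
    and g: "log_rational gx" "log_rational gy"
      "\<And>x y. x \<noteq> 0 \<Longrightarrow> y \<noteq> 0 \<Longrightarrow> (g has_derivative (\<lambda>v. fst v * gx (x, y) + snd v * gy (x, y))) (at (x, y))"
    using assms(3,4) unfolding has_log_rational_gradient_def by blast
  show ?thesis
  proof (rule has_log_rational_gradientI[of "\<lambda>z. f z * gx z + fx z * g z" "\<lambda>z. f z * gy z + fy z * g z"])
    show "log_rational (\<lambda>z. f z * gx z + fx z * g z)" "log_rational (\<lambda>z. f z * gy z + fy z * g z)"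
      using assms(1,2) f g by (simp_all add: log_rational.add log_rational.mult)
    fix x y :: real assume "x \<noteq> 0" "y \<noteq> 0"
    from has_derivative_mult[OF f(3)[OF this] g(3)[OF this]]
    show "((\<lambda>z. f z * g z) has_derivative (\<lambda>v. fst v * (f (x, y) * gx (x, y) + fx (x, y) * g (x, y)) +
        snd v * (f (x, y) * gy (x, y) + fy (x, y) * g (x, y)))) (at (x, y))"
      by (simp add: algebra_simps)
  qed
qed

lemma log_rational_has_log_rational_gradient: "log_rational m \<Longrightarrow> has_log_rational_gradient m"
proof (induction rule: log_rational.induct)
  case const
  show ?case by (rule has_log_rational_gradientI[of "\<lambda>z. 0" "\<lambda>z. 0"]) (auto intro: log_rational.const)
next
  case fst
  show ?case
    by (rule has_log_rational_gradientI[of "\<lambda>z. 1" "\<lambda>z. 0"]) (auto intro: log_rational.const derivative_eq_intros)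
next
  case snd
  show ?case
    by (rule has_log_rational_gradientI[of "\<lambda>z. 0" "\<lambda>z. 1"]) (auto intro: log_rational.const derivative_eq_intros)
next
  case inverse_fst
  show ?case
    by (rule has_log_rational_gradientI[of "\<lambda>z. - 1 * (inverse (fst z) * inverse (fst z))" "\<lambda>z. 0"])
       (intro log_rational.intros, intro log_rational.intros,
        auto intro!: derivative_eq_intros simp: field_simps)
next
  case inverse_snd
  show ?case
    by (rule has_log_rational_gradientI[of "\<lambda>z. 0" "\<lambda>z. - 1 * (inverse (snd z) * inverse (snd z))"])
       (intro log_rational.intros, intro log_rational.intros,
        auto intro!: derivative_eq_intros simp: field_simps)
next
  case ln_ratio
  show ?case
    by (rule has_log_rational_gradientI[of "\<lambda>z. inverse (fst z)" "\<lambda>z. - 1 * inverse (snd z)"])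
       (intro log_rational.intros, intro log_rational.intros,
        rule has_derivative_eq_rhs[OF has_derivative_ln_abs_ratio], assumption+, simp)
next
  case (add f g)
  then show ?case by (simp add: has_log_rational_gradient_add)
next
  case (mult f g)
  then show ?case by (intro has_log_rational_gradient_mult)
qed

definition inverse_power_bounded :: "real \<Rightarrow> real \<Rightarrow> (real \<times> real \<Rightarrow> real) \<Rightarrow> bool" where
  "inverse_power_bounded \<epsilon> \<eta> m \<longleftrightarrow> (\<exists>C K. 0 \<le> C \<and> (\<forall>x y. (x, y) \<in> Zset \<epsilon> \<eta> \<longrightarrow> x \<noteq> 0 \<longrightarrow> y \<noteq> 0 \<longrightarrow>
      \<bar>x * y\<bar> \<le> 1 \<longrightarrow> \<bar>m (x, y)\<bar> \<le> C * inverse \<bar>x * y\<bar> ^ K))"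

lemma inverse_power_boundedI:
  assumes "0 \<le> C"
    and "\<And>x y. (x, y) \<in> Zset \<epsilon> \<eta> \<Longrightarrow> x \<noteq> 0 \<Longrightarrow> y \<noteq> 0 \<Longrightarrow> \<bar>x * y\<bar> \<le> 1 \<Longrightarrow>
      \<bar>m (x, y)\<bar> \<le> C * inverse \<bar>x * y\<bar> ^ K"
  shows "inverse_power_bounded \<epsilon> \<eta> m"
  using assms unfolding inverse_power_bounded_def by blast

lemma inverse_power_bounded_add:
  assumes "inverse_power_bounded \<epsilon> \<eta> f" "inverse_power_bounded \<epsilon> \<eta> g"
  shows "inverse_power_bounded \<epsilon> \<eta> (\<lambda>z. f z + g z)"
proof -
  obtain C1 K1 C2 K2 where f: "0 \<le> C1" "\<And>x y. (x, y) \<in> Zset \<epsilon> \<eta> \<Longrightarrow> x \<noteq> 0 \<Longrightarrow> y \<noteq> 0 \<Longrightarrow>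
      \<bar>x * y\<bar> \<le> 1 \<Longrightarrow> \<bar>f (x, y)\<bar> \<le> C1 * inverse \<bar>x * y\<bar> ^ K1"
    and g: "0 \<le> C2" "\<And>x y. (x, y) \<in> Zset \<epsilon> \<eta> \<Longrightarrow> x \<noteq> 0 \<Longrightarrow> y \<noteq> 0 \<Longrightarrow>
      \<bar>x * y\<bar> \<le> 1 \<Longrightarrow> \<bar>g (x, y)\<bar> \<le> C2 * inverse \<bar>x * y\<bar> ^ K2"
    using assms unfolding inverse_power_bounded_def by metis
  show ?thesis
  proof (rule inverse_power_boundedI[of "C1 + C2" _ _ _ "max K1 K2"])
    fix x y assume a: "(x, y) \<in> Zset \<epsilon> \<eta>" "x \<noteq> 0" "y \<noteq> 0" "\<bar>x * y\<bar> \<le> 1"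
    have s: "0 < \<bar>x * y\<bar>" "\<bar>x * y\<bar> \<le> 1" using a by auto
    have "\<bar>f (x, y) + g (x, y)\<bar> \<le> C1 * inverse \<bar>x * y\<bar> ^ K1 + C2 * inverse \<bar>x * y\<bar> ^ K2"
      using f(2)[OF a] g(2)[OF a] by linarith
    also have "\<dots> \<le> C1 * inverse \<bar>x * y\<bar> ^ max K1 K2 + C2 * inverse \<bar>x * y\<bar> ^ max K1 K2"
      by (intro add_mono mult_left_mono inverse_abs_power_increasing[OF s] f(1) g(1)) simp_all
    finally show "\<bar>f (x, y) + g (x, y)\<bar> \<le> (C1 + C2) * inverse \<bar>x * y\<bar> ^ max K1 K2"
      by (simp add: algebra_simps)
  qed (use f g in simp)
qed

lemma inverse_power_bounded_mult:
  assumes "inverse_power_bounded \<epsilon> \<eta> f" "inverse_power_bounded \<epsilon> \<eta> g"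
  shows "inverse_power_bounded \<epsilon> \<eta> (\<lambda>z. f z * g z)"
proof -
  obtain C1 K1 C2 K2 where f: "0 \<le> C1" "\<And>x y. (x, y) \<in> Zset \<epsilon> \<eta> \<Longrightarrow> x \<noteq> 0 \<Longrightarrow> y \<noteq> 0 \<Longrightarrow>
      \<bar>x * y\<bar> \<le> 1 \<Longrightarrow> \<bar>f (x, y)\<bar> \<le> C1 * inverse \<bar>x * y\<bar> ^ K1"
    and g: "0 \<le> C2" "\<And>x y. (x, y) \<in> Zset \<epsilon> \<eta> \<Longrightarrow> x \<noteq> 0 \<Longrightarrow> y \<noteq> 0 \<Longrightarrow>
      \<bar>x * y\<bar> \<le> 1 \<Longrightarrow> \<bar>g (x, y)\<bar> \<le> C2 * inverse \<bar>x * y\<bar> ^ K2"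
    using assms unfolding inverse_power_bounded_def by metis
  show ?thesis
  proof (rule inverse_power_boundedI[of "C1 * C2" _ _ _ "K1 + K2"])
    fix x y assume a: "(x, y) \<in> Zset \<epsilon> \<eta>" "x \<noteq> 0" "y \<noteq> 0" "\<bar>x * y\<bar> \<le> 1"
    have "\<bar>f (x, y)\<bar> * \<bar>g (x, y)\<bar> \<le> (C1 * inverse \<bar>x * y\<bar> ^ K1) * (C2 * inverse \<bar>x * y\<bar> ^ K2)"
      by (rule mult_mono[OF f(2)[OF a] g(2)[OF a]]) (use f(1) in simp_all)
    then show "\<bar>f (x, y) * g (x, y)\<bar> \<le> (C1 * C2) * inverse \<bar>x * y\<bar> ^ (K1 + K2)"
      by (simp add: algebra_simps power_add abs_mult)
  qed (use f g in simp)
qed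

lemma abs_ln_abs_ratio_le:
  assumes a: "(x, y) \<in> Zset \<epsilon> \<eta>" "x \<noteq> 0" "y \<noteq> 0" "\<bar>x * y\<bar> \<le> 1"
  shows "\<bar>ln \<bar>x / y\<bar>\<bar> \<le> (2 * \<bar>ln \<bar>\<epsilon>\<bar>\<bar> + 1) * inverse \<bar>x * y\<bar>"
proof -
  define s where "s = \<bar>x * y\<bar>"
  have s: "0 < s" "s \<le> 1" using a unfolding s_def by auto
  have ax: "\<bar>x\<bar> < \<epsilon>" "\<bar>y\<bar> < \<epsilon>" using a unfolding Zset_def by auto
  have e0: "0 < \<epsilon>" using ax by linarith
  have lx: "ln \<bar>x\<bar> < ln \<epsilon>" "ln \<bar>y\<bar> < ln \<epsilon>" using ax a by auto
  have ls: "ln s = ln \<bar>x\<bar> + ln \<bar>y\<bar>" unfolding s_def using a by (simp add: abs_mult ln_mult)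
  have lr: "ln \<bar>x / y\<bar> = ln \<bar>x\<bar> - ln \<bar>y\<bar>" using a by (simp add: abs_divide ln_div)
  have l1: "- ln s \<le> inverse s" using ln_le_minus_one[of "inverse s"] s by (simp add: ln_inverse)
  have l2: "- ln s \<ge> 0" using s by simp
  have "\<bar>ln \<bar>x / y\<bar>\<bar> \<le> 2 * \<bar>ln \<epsilon>\<bar> + inverse s"
    using lx ls lr l1 l2 by (simp add: abs_le_iff) linarith
  also have "\<dots> \<le> (2 * \<bar>ln \<bar>\<epsilon>\<bar>\<bar> + 1) * inverse s"
  proof -
    have "1 \<le> inverse s" using s by (simp add: one_le_inverse)
    then have "2 * \<bar>ln \<epsilon>\<bar> * 1 \<le> 2 * \<bar>ln \<epsilon>\<bar> * inverse s"
      by (intro mult_left_mono) simp_all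
    then show ?thesis using e0 by (simp add: algebra_simps)
  qed
  finally show ?thesis unfolding s_def .
qed

lemma log_rational_inverse_power_bounded: "log_rational m \<Longrightarrow> inverse_power_bounded \<epsilon> \<eta> m"
proof (induction rule: log_rational.induct)
  case (const c)
  show ?case by (rule inverse_power_boundedI[of "\<bar>c\<bar>" _ _ _ 0]) simp_all
next
  case fst
  show ?case by (rule inverse_power_boundedI[of "\<bar>\<epsilon>\<bar>" _ _ _ 0]) (auto simp: Zset_def)
next
  case snd
  show ?case by (rule inverse_power_boundedI[of "\<bar>\<epsilon>\<bar>" _ _ _ 0]) (auto simp: Zset_def)
next
  case inverse_fst
  show ?case
  proof (rule inverse_power_boundedI[of "\<bar>\<epsilon>\<bar>" _ _ _ 1])
    fix x y assume a: "(x, y) \<in> Zset \<epsilon> \<eta>" "x \<noteq> 0" "y \<noteq> 0"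
    have "\<bar>inverse x\<bar> = \<bar>y\<bar> * inverse \<bar>x * y\<bar>" using a by (simp add: abs_mult field_simps)
    also have "\<dots> \<le> \<bar>\<epsilon>\<bar> * inverse \<bar>x * y\<bar>" using a unfolding Zset_def by (intro mult_right_mono) auto
    finally show "\<bar>inverse (fst (x, y))\<bar> \<le> \<bar>\<epsilon>\<bar> * inverse \<bar>x * y\<bar> ^ 1" by simp
  qed simp
next
  case inverse_snd
  show ?case
  proof (rule inverse_power_boundedI[of "\<bar>\<epsilon>\<bar>" _ _ _ 1])
    fix x y assume a: "(x, y) \<in> Zset \<epsilon> \<eta>" "x \<noteq> 0" "y \<noteq> 0"
    have "\<bar>inverse y\<bar> = \<bar>x\<bar> * inverse \<bar>x * y\<bar>" using a by (simp add: abs_mult field_simps)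
    also have "\<dots> \<le> \<bar>\<epsilon>\<bar> * inverse \<bar>x * y\<bar>" using a unfolding Zset_def by (intro mult_right_mono) auto
    finally show "\<bar>inverse (snd (x, y))\<bar> \<le> \<bar>\<epsilon>\<bar> * inverse \<bar>x * y\<bar> ^ 1" by simp
  qed simp
next
  case ln_ratio
  show ?case
    by (rule inverse_power_boundedI[of "2 * \<bar>ln \<bar>\<epsilon>\<bar>\<bar> + 1" _ _ _ 1]) (use abs_ln_abs_ratio_le in auto)
qed (simp_all add: inverse_power_bounded_add inverse_power_bounded_mult)

definition flat_smooth_on :: "real set \<Rightarrow> (real \<Rightarrow> complex) \<Rightarrow> bool" where
  "flat_smooth_on I b \<longleftrightarrow> infinitely_differentiable_on I b \<and> (\<forall>k. (nth_vderiv k b \<longlongrightarrow> 0) (at 0 within I))"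

lemma flat_smooth_on_vector_derivative: "flat_smooth_on I b \<Longrightarrow> flat_smooth_on I (\<lambda>t. vector_derivative b (at t))"
  unfolding flat_smooth_on_def by (simp add: infinitely_differentiable_on_vector_derivative nth_vderiv_Suc'[symmetric])

lemma nth_vderiv_cmult:
  fixes b :: "real \<Rightarrow> complex"
  assumes I: "open I" and b: "infinitely_differentiable_on I b"
  shows "t \<in> I \<Longrightarrow> nth_vderiv k (\<lambda>t. c * b t) t = c * nth_vderiv k b t"
    and "infinitely_differentiable_on I (\<lambda>t. c * b t)"
proof -
  have "((\<lambda>t. c * nth_vderiv n b t) has_vector_derivative c * nth_vderiv (Suc n) b t) (at t)" if "t \<in> I" for n t
    by (rule has_vector_derivative_mult_right[OF infinitely_differentiable_on_has_vector_derivative[OF b that]])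
  then show "t \<in> I \<Longrightarrow> nth_vderiv k (\<lambda>t. c * b t) t = c * nth_vderiv k b t"
    and "infinitely_differentiable_on I (\<lambda>t. c * b t)"
    by (intro nth_vderiv_eq_derivative_sequence[OF I, where F="\<lambda>n t. c * nth_vderiv n b t"]
        infinitely_differentiable_on_derivative_sequence[OF I, where F="\<lambda>n t. c * nth_vderiv n b t"]; simp)+
qed

lemma flat_smooth_on_cmult:
  assumes I: "open I" and f: "flat_smooth_on I b"
  shows "flat_smooth_on I (\<lambda>t. c * b t)"
proof -
  have b: "infinitely_differentiable_on I b" using f unfolding flat_smooth_on_def by blast
  have "(nth_vderiv k (\<lambda>t. c * b t) \<longlongrightarrow> 0) (at 0 within I)" for k
  proof -
    have "((\<lambda>t. c * nth_vderiv k b t) \<longlongrightarrow> c * 0) (at 0 within I)"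
      using f unfolding flat_smooth_on_def by (intro tendsto_intros) blast
    moreover have "eventually (\<lambda>t. c * nth_vderiv k b t = nth_vderiv k (\<lambda>t. c * b t) t) (at 0 within I)"
      unfolding eventually_at_filter by (rule always_eventually) (simp add: nth_vderiv_cmult(1)[OF I b])
    ultimately show ?thesis using tendsto_cong by fastforce
  qed
  then show ?thesis using nth_vderiv_cmult(2)[OF I b] unfolding flat_smooth_on_def by blast
qed

lemma flat_smooth_on_norm_le_pow:
  assumes S: "one_sided_interval I \<delta>" and f: "flat_smooth_on I b"
  shows "\<exists>d>0. \<forall>t\<in>I. \<bar>t\<bar> < d \<longrightarrow> norm (b t) \<le> \<bar>t\<bar>^N"
  using flat_imp_norm_le_pow[OF S, of b 0 N] f unfolding flat_smooth_on_def by simp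

definition flat_model_term :: "(real \<Rightarrow> complex) \<Rightarrow> (real \<times> real \<Rightarrow> real) \<Rightarrow> real \<times> real \<Rightarrow> complex" where
  "flat_model_term b m z = b (fst z * snd z) * of_real (m z) * model_phase (fst z) (snd z)"

lemma norm_model_phase[simp]: "norm (model_phase x y) = 1"
proof -
  have "model_phase x y = exp (\<i> * of_real (- (x * y * ln \<bar>x / y\<bar>) / 2))"
    unfolding model_phase_def by (simp add: algebra_simps)
  then show ?thesis by simp
qed

lemma model_phase_has_derivative:
  fixes x y :: real
  assumes xy: "x \<noteq> 0" "y \<noteq> 0"
  shows "((\<lambda>z. model_phase (fst z) (snd z)) has_derivative
     (\<lambda>v. model_phase x y * ((- \<i> / 2) * of_real (fst v * (y * ln \<bar>x / y\<bar> + y) + snd v * (x * ln \<bar>x / y\<bar> + (-1) * x))))) (at (x, y))"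
proof -
  have L: "((\<lambda>z. ln \<bar>fst z / snd z\<bar>) has_derivative (\<lambda>v. fst v * inverse x + snd v * (- inverse y))) (at (x, y))"
    by (rule has_derivative_ln_abs_ratio[OF xy])
  have w: "((\<lambda>z. fst z * snd z * ln \<bar>fst z / snd z\<bar>) has_derivative
      (\<lambda>v. fst v * (y * ln \<bar>x / y\<bar> + y) + snd v * (x * ln \<bar>x / y\<bar> + (-1) * x))) (at (x, y))"
  proof -
    have "((\<lambda>z. fst z * snd z * ln \<bar>fst z / snd z\<bar>) has_derivative
      (\<lambda>v. fst (x, y) * snd (x, y) * (fst v * inverse x + snd v * (- inverse y)) + (fst (x, y) * snd v + fst v * snd (x, y)) * ln \<bar>fst (x, y) / snd (x, y)\<bar>)) (at (x, y))"
      by (intro has_derivative_mult L has_derivative_fst has_derivative_snd has_derivative_ident)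
    moreover have "(\<lambda>v. fst (x, y) * snd (x, y) * (fst v * inverse x + snd v * (- inverse y)) + (fst (x, y) * snd v + fst v * snd (x, y)) * ln \<bar>fst (x, y) / snd (x, y)\<bar>)
       = (\<lambda>v. fst v * (y * ln \<bar>x / y\<bar> + y) + snd v * (x * ln \<bar>x / y\<bar> + (-1) * x))"
      using xy by (auto simp: fun_eq_iff field_simps)
    ultimately show ?thesis by simp
  qed
  have h: "((\<lambda>z. (- \<i> / 2) * of_real (fst z * snd z * ln \<bar>fst z / snd z\<bar>)) has_derivative
      (\<lambda>v. (- \<i> / 2) * of_real (fst v * (y * ln \<bar>x / y\<bar> + y) + snd v * (x * ln \<bar>x / y\<bar> + (-1) * x)))) (at (x, y))"
    by (intro has_derivative_mult_right has_derivative_of_real w)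
  have e: "(exp has_derivative (\<lambda>h. exp ((- \<i> / 2) * of_real (fst (x, y) * snd (x, y) * ln \<bar>fst (x, y) / snd (x, y)\<bar>)) * h))
       (at ((- \<i> / 2) * of_real (fst (x, y) * snd (x, y) * ln \<bar>fst (x, y) / snd (x, y)\<bar>)))"
    using DERIV_exp unfolding has_field_derivative_def .
  from has_derivative_compose[OF h e]
  show ?thesis unfolding model_phase_def by (simp add: algebra_simps)
qed

lemma flat_model_term_has_derivative:
  fixes x y :: real
  assumes xy: "x \<noteq> 0" "y \<noteq> 0"
    and hb: "(b has_vector_derivative b') (at (x * y))"
    and hm: "(m has_derivative (\<lambda>v. fst v * mx + snd v * my)) (at (x, y))"
  shows "(flat_model_term b m has_derivative (\<lambda>v. of_real (fst v) *
     (b' * of_real (y * m (x, y)) * model_phase x y + b (x * y) * of_real mx * model_phase x y +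
      (- \<i> / 2) * b (x * y) * of_real (m (x, y) * (y * ln \<bar>x / y\<bar> + y)) * model_phase x y)
    + of_real (snd v) *
     (b' * of_real (x * m (x, y)) * model_phase x y + b (x * y) * of_real my * model_phase x y +
      (- \<i> / 2) * b (x * y) * of_real (m (x, y) * (x * ln \<bar>x / y\<bar> + (-1) * x)) * model_phase x y))) (at (x, y))"
proof -
  have s: "((\<lambda>z. fst z * snd z) has_derivative (\<lambda>v. fst (x, y) * snd v + fst v * snd (x, y))) (at (x, y))"
    by (intro has_derivative_mult has_derivative_fst has_derivative_snd has_derivative_ident)
  have hb': "(b has_derivative (\<lambda>h. h *\<^sub>R b')) (at (fst (x, y) * snd (x, y)))"
    using hb unfolding has_vector_derivative_def by simp
  have F1: "((\<lambda>z. b (fst z * snd z)) has_derivative (\<lambda>v. (fst (x, y) * snd v + fst v * snd (x, y)) *\<^sub>R b')) (at (x, y))"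
    using has_derivative_compose[OF s hb'] .
  have F2: "((\<lambda>z. complex_of_real (m z)) has_derivative (\<lambda>v. of_real (fst v * mx + snd v * my))) (at (x, y))"
    by (rule has_derivative_of_real[OF hm])
  note F3 = model_phase_has_derivative[OF xy]
  have "(flat_model_term b m has_derivative (\<lambda>v.
      (b (fst (x, y) * snd (x, y)) * of_real (m (x, y))) *
        (model_phase x y * ((- \<i> / 2) * of_real (fst v * (y * ln \<bar>x / y\<bar> + y) + snd v * (x * ln \<bar>x / y\<bar> + (-1) * x))))
      + (b (fst (x, y) * snd (x, y)) * of_real (fst v * mx + snd v * my) +
         (fst (x, y) * snd v + fst v * snd (x, y)) *\<^sub>R b' * of_real (m (x, y))) * model_phase (fst (x, y)) (snd (x, y)))) (at (x, y))"
    unfolding flat_model_term_def by (intro has_derivative_mult F1 F2 F3)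
  then show ?thesis
    by (rule has_derivative_eq_rhs) (simp add: fun_eq_iff scaleR_conv_of_real algebra_simps)
qed

inductive flat_model_sum :: "real set \<Rightarrow> (real \<times> real \<Rightarrow> complex) \<Rightarrow> bool" for I where
  model_term: "flat_smooth_on I b \<Longrightarrow> log_rational m \<Longrightarrow> flat_model_sum I (flat_model_term b m)"
| add: "flat_model_sum I f \<Longrightarrow> flat_model_sum I g \<Longrightarrow> flat_model_sum I (\<lambda>z. f z + g z)"

definition hyperbolic_sector :: "real set \<Rightarrow> (real \<times> real) set" where
  "hyperbolic_sector I = {z. fst z \<noteq> 0 \<and> snd z \<noteq> 0 \<and> fst z * snd z \<in> I}"

lemma flat_model_sum_cmult:
  assumes I: "open I"
  shows "flat_model_sum I f \<Longrightarrow> flat_model_sum I (\<lambda>z. c * f z)"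
proof (induction rule: flat_model_sum.induct)
  case (model_term b m)
  have "(\<lambda>z. c * flat_model_term b m z) = flat_model_term (\<lambda>t. c * b t) m" by (simp add: fun_eq_iff flat_model_term_def mult.assoc)
  then show ?case using flat_model_sum.model_term[OF flat_smooth_on_cmult[OF I model_term(1)] model_term(2)] by simp
next
  case (add f g)
  have "(\<lambda>z. c * (f z + g z)) = (\<lambda>z. c * f z + c * g z)" by (simp add: fun_eq_iff algebra_simps)
  then show ?case using flat_model_sum.add[OF add.IH] by simp
qed

lemma flat_model_sum_has_derivative:
  assumes I: "open I"
  shows "flat_model_sum I f \<Longrightarrow> \<exists>fx fy. flat_model_sum I fx \<and> flat_model_sum I fy \<and>
     (\<forall>z\<in>hyperbolic_sector I. (f has_derivative (\<lambda>v. of_real (fst v) * fx z + of_real (snd v) * fy z)) (at z))"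
proof (induction rule: flat_model_sum.induct)
  case (model_term b m)
  obtain mx my where mxy: "log_rational mx" "log_rational my"
      "\<And>x y. x \<noteq> 0 \<Longrightarrow> y \<noteq> 0 \<Longrightarrow> (m has_derivative (\<lambda>v. fst v * mx (x, y) + snd v * my (x, y))) (at (x, y))"
    using log_rational_has_log_rational_gradient[OF model_term(2)] unfolding has_log_rational_gradient_def by blast
  define b' where "b' t = vector_derivative b (at t)" for t
  define c where "c t = (- \<i> / 2) * b t" for t
  have fb': "flat_smooth_on I b'" unfolding b'_def by (rule flat_smooth_on_vector_derivative[OF model_term(1)])
  have fc: "flat_smooth_on I c" unfolding c_def by (rule flat_smooth_on_cmult[OF I model_term(1)])
  have hb: "infinitely_differentiable_on I b" using model_term(1) unfolding flat_smooth_on_def by blast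
  define fx where "fx z = flat_model_term b' (\<lambda>z. snd z * m z) z + flat_model_term b mx z + flat_model_term c (\<lambda>z. m z * (snd z * ln \<bar>fst z / snd z\<bar> + snd z)) z" for z
  define fy where "fy z = flat_model_term b' (\<lambda>z. fst z * m z) z + flat_model_term b my z + flat_model_term c (\<lambda>z. m z * (fst z * ln \<bar>fst z / snd z\<bar> + (-1) * fst z)) z" for z
  have "flat_model_sum I fx" unfolding fx_def
    by (intro flat_model_sum.add flat_model_sum.model_term fb' fc model_term(1) mxy log_rational.intros model_term(2))
  moreover have "flat_model_sum I fy" unfolding fy_def
    by (intro flat_model_sum.add flat_model_sum.model_term fb' fc model_term(1) mxy log_rational.intros model_term(2))
  moreover have "(flat_model_term b m has_derivative (\<lambda>v. of_real (fst v) * fx z + of_real (snd v) * fy z)) (at z)"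
    if z: "z \<in> hyperbolic_sector I" for z
  proof -
    obtain x y where xy: "z = (x, y)" by (cases z)
    have nz: "x \<noteq> 0" "y \<noteq> 0" "x * y \<in> I" using z xy unfolding hyperbolic_sector_def by auto
    have hbv: "(b has_vector_derivative b' (x * y)) (at (x * y))"
      using infinitely_differentiable_on_has_vector_derivative[OF hb nz(3), of 0] unfolding b'_def by (simp add: nth_vderiv_Suc)
    have hm: "(m has_derivative (\<lambda>v. fst v * mx (x, y) + snd v * my (x, y))) (at (x, y))"
      using mxy(3) nz by auto
    from flat_model_term_has_derivative[OF nz(1,2) hbv hm] show ?thesis
      unfolding xy fx_def fy_def by (simp add: flat_model_term_def c_def mult.assoc)
  qed
  ultimately show ?case by blast
next
  case (add f g)
  then obtain fx fy gx gy where f: "flat_model_sum I fx" "flat_model_sum I fy" "\<forall>z\<in>hyperbolic_sector I. (f has_derivative (\<lambda>v. of_real (fst v) * fx z + of_real (snd v) * fy z)) (at z)"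
    and g: "flat_model_sum I gx" "flat_model_sum I gy" "\<forall>z\<in>hyperbolic_sector I. (g has_derivative (\<lambda>v. of_real (fst v) * gx z + of_real (snd v) * gy z)) (at z)" by blast
  have d: "\<forall>z\<in>hyperbolic_sector I. ((\<lambda>z. f z + g z) has_derivative (\<lambda>v. of_real (fst v) * (fx z + gx z) + of_real (snd v) * (fy z + gy z))) (at z)"
  proof
    fix z assume z: "z \<in> hyperbolic_sector I"
    from has_derivative_add[OF f(3)[rule_format, OF z] g(3)[rule_format, OF z]]
    show "((\<lambda>z. f z + g z) has_derivative (\<lambda>v. of_real (fst v) * (fx z + gx z) + of_real (snd v) * (fy z + gy z))) (at z)"
      by (simp add: algebra_simps)
  qed
  show ?case
    using flat_model_sum.add[OF f(1) g(1)] flat_model_sum.add[OF f(2) g(2)] d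
    by (intro exI[of _ "\<lambda>z. fx z + gx z"] exI[of _ "\<lambda>z. fy z + gy z"]) blast
qed

lemma flat_model_sum_bound:
  assumes S: "one_sided_interval I \<delta>"
  shows "flat_model_sum I f \<Longrightarrow> \<exists>M d. 0 < d \<and> (\<forall>x y. (x, y) \<in> Zset \<epsilon> \<eta> \<and> x \<noteq> 0 \<and> y \<noteq> 0 \<and> x * y \<in> I \<and> \<bar>x * y\<bar> < d \<longrightarrow>
      norm (f (x, y)) \<le> M * (x * y)^2)"
proof (induction rule: flat_model_sum.induct)
  case (model_term b m)
  obtain C K where CK: "0 \<le> C" "\<And>x y. (x, y) \<in> Zset \<epsilon> \<eta> \<and> x \<noteq> 0 \<and> y \<noteq> 0 \<and> \<bar>x * y\<bar> \<le> 1 \<Longrightarrow>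
       \<bar>m (x, y)\<bar> \<le> C * inverse \<bar>x * y\<bar> ^ K"
    using log_rational_inverse_power_bounded[OF model_term(2), of \<epsilon> \<eta>] unfolding inverse_power_bounded_def by blast
  obtain d where d: "d > 0" "\<And>t. t \<in> I \<Longrightarrow> \<bar>t\<bar> < d \<Longrightarrow> norm (b t) \<le> \<bar>t\<bar>^(K + 2)"
    using flat_smooth_on_norm_le_pow[OF S model_term(1), of "K + 2"] by blast
  have d0: "0 < min d 1" using d by simp
  have "\<forall>x y. (x, y) \<in> Zset \<epsilon> \<eta> \<and> x \<noteq> 0 \<and> y \<noteq> 0 \<and> x * y \<in> I \<and> \<bar>x * y\<bar> < min d 1 \<longrightarrow>
      norm (flat_model_term b m (x, y)) \<le> C * (x * y)^2"
  proof (intro allI impI)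
    fix x y assume a: "(x, y) \<in> Zset \<epsilon> \<eta> \<and> x \<noteq> 0 \<and> y \<noteq> 0 \<and> x * y \<in> I \<and> \<bar>x * y\<bar> < min d 1"
    have s: "0 < \<bar>x * y\<bar>" "\<bar>x * y\<bar> \<le> 1" using a by auto
    have "norm (flat_model_term b m (x, y)) = norm (b (x * y)) * \<bar>m (x, y)\<bar>"
      unfolding flat_model_term_def by (simp add: norm_mult)
    also have "\<dots> \<le> \<bar>x * y\<bar>^(K + 2) * (C * inverse \<bar>x * y\<bar> ^ K)"
      by (rule mult_mono[OF d(2) CK(2)]) (use a in auto)
    also have "\<dots> = C * (x * y)^2" using s by (simp add: power_add power_inverse field_simps power2_eq_square)
    finally show "norm (flat_model_term b m (x, y)) \<le> C * (x * y)^2" .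
  qed
  then show ?case using d0 by blast
next
  case (add f g)
  then obtain M1 d1 M2 d2 where
    f: "0 < d1" "\<And>x y. (x, y) \<in> Zset \<epsilon> \<eta> \<and> x \<noteq> 0 \<and> y \<noteq> 0 \<and> x * y \<in> I \<and> \<bar>x * y\<bar> < d1 \<Longrightarrow> norm (f (x, y)) \<le> M1 * (x * y)^2" and
    g: "0 < d2" "\<And>x y. (x, y) \<in> Zset \<epsilon> \<eta> \<and> x \<noteq> 0 \<and> y \<noteq> 0 \<and> x * y \<in> I \<and> \<bar>x * y\<bar> < d2 \<Longrightarrow> norm (g (x, y)) \<le> M2 * (x * y)^2"
    by metis
  have d0: "0 < min d1 d2" using f g by simp
  have "\<forall>x y. (x, y) \<in> Zset \<epsilon> \<eta> \<and> x \<noteq> 0 \<and> y \<noteq> 0 \<and> x * y \<in> I \<and> \<bar>x * y\<bar> < min d1 d2 \<longrightarrow>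
      norm (f (x, y) + g (x, y)) \<le> (M1 + M2) * (x * y)^2"
  proof (intro allI impI)
    fix x y assume a: "(x, y) \<in> Zset \<epsilon> \<eta> \<and> x \<noteq> 0 \<and> y \<noteq> 0 \<and> x * y \<in> I \<and> \<bar>x * y\<bar> < min d1 d2"
    have "norm (f (x, y) + g (x, y)) \<le> norm (f (x, y)) + norm (g (x, y))" by (rule norm_triangle_ineq)
    also have "\<dots> \<le> M1 * (x * y)^2 + M2 * (x * y)^2" using f(2)[of x y] g(2)[of x y] a by (intro add_mono) auto
    finally show "norm (f (x, y) + g (x, y)) \<le> (M1 + M2) * (x * y)^2" by (simp add: algebra_simps)
  qed
  then show ?case using d0 by blast
qed

lemma open_Zset: "open (Zset \<epsilon> \<eta>)"
proof -
  have "Zset \<epsilon> \<eta> = {z. \<bar>fst z\<bar> < \<epsilon>} \<inter> {z. \<bar>snd z\<bar> < \<epsilon>} \<inter> {z. \<bar>fst z * snd z\<bar> < \<eta>}"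
    unfolding Zset_def by auto
  then show ?thesis by (simp add: open_Int open_Collect_less continuous_intros)
qed

lemma open_quadrant: "open (quadrant j)"
proof -
  have "open {z::real \<times> real. a * fst z > 0 \<and> b * snd z > 0}" for a b :: real
    by (simp add: open_Collect_conj open_Collect_less continuous_intros)
  from this[of 1 1] this[of "-1" 1] this[of "-1" "-1"] this[of 1 "-1"] show ?thesis
    unfolding quadrant_def by (auto simp: case_prod_unfold)
qed

lemma quadrant_off_axes: "j \<in> {1,2,3,4} \<Longrightarrow> z \<in> quadrant j \<Longrightarrow> fst z * snd z \<noteq> 0"
  unfolding quadrant_def by (auto split: if_splits)

lemma quad_index_quadrant: "j \<in> {1,2,3,4} \<Longrightarrow> z \<in> quadrant j \<Longrightarrow> quad_index z = j"
  unfolding quadrant_def quad_index_def by (auto split: if_splits)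

lemma quadrant_hyperbolic_sector:
  "j \<in> {1,2,3,4} \<Longrightarrow> z \<in> Zset \<epsilon> \<eta> \<inter> quadrant j \<Longrightarrow> z \<in> hyperbolic_sector (Iint \<eta> j)"
  unfolding quadrant_def hyperbolic_sector_def Iint_def Zset_def
  by (auto simp: abs_less_iff zero_less_mult_iff mult_less_0_iff split: if_splits)

lemma quad_index_off_axes:
  assumes "fst z * snd z \<noteq> 0"
  shows "quad_index z \<in> {1,2,3,4} \<and> z \<in> quadrant (quad_index z)"
  using assms unfolding quad_index_def quadrant_def by (cases z) auto

lemma one_sided_interval_Iint: "0 < \<eta> \<Longrightarrow> one_sided_interval (Iint \<eta> j) \<eta>"
  unfolding one_sided_interval_def Iint_def by auto

lemma abs_fst_times_snd_le_near_axes: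
  fixes z w :: "real \<times> real"
  assumes "fst z * snd z = 0" "norm (w - z) \<le> 1"
  shows "\<bar>fst w * snd w\<bar> \<le> (norm z + 1) * norm (w - z)"
proof -
  have f1: "\<bar>fst w - fst z\<bar> \<le> norm (w - z)" using norm_fst_le[of "fst w - fst z" "snd w - snd z"]
    by (cases w, cases z) simp
  have f2: "\<bar>snd w - snd z\<bar> \<le> norm (w - z)" using norm_snd_le[of "snd w - snd z" "fst w - fst z"]
    by (cases w, cases z) simp
  have f1': "\<bar>fst w - fst z\<bar> \<le> norm (w - z)" using f1 .
  have z1: "\<bar>fst z\<bar> \<le> norm z" using norm_fst_le[of "fst z" "snd z"] by simp
  have z2: "\<bar>snd z\<bar> \<le> norm z" using norm_snd_le[of "snd z" "fst z"] by (cases z) simp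
  from assms(1) consider "fst z = 0" | "snd z = 0" by auto
  then show ?thesis
  proof cases
    case 1
    have "\<bar>snd w\<bar> \<le> norm z + 1" using f2 z2 assms(2) by linarith
    moreover have "\<bar>fst w\<bar> \<le> norm (w - z)" using f1 1 by simp
    ultimately have "\<bar>fst w\<bar> * \<bar>snd w\<bar> \<le> norm (w - z) * (norm z + 1)"
      by (intro mult_mono) simp_all
    then show ?thesis by (simp add: abs_mult mult.commute)
  next
    case 2
    have "\<bar>fst w\<bar> \<le> norm z + 1" using f1 z1 assms(2) by linarith
    moreover have "\<bar>snd w\<bar> \<le> norm (w - z)" using f2 2 by simp
    ultimately have "\<bar>fst w\<bar> * \<bar>snd w\<bar> \<le> (norm z + 1) * norm (w - z)"
      by (intro mult_mono) simp_all
    then show ?thesis by (simp add: abs_mult)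
  qed
qed

lemma has_derivative_0_of_quadratic_bound:
  fixes g :: "real \<times> real \<Rightarrow> complex"
  assumes Z: "open Z" "z \<in> Z" and ax: "fst z * snd z = 0" and gz: "g z = 0"
    and M: "0 \<le> M" "0 < d" "\<And>w. w \<in> Z \<Longrightarrow> \<bar>fst w * snd w\<bar> < d \<Longrightarrow> norm (g w) \<le> M * (fst w * snd w)^2"
  shows "(g has_derivative (\<lambda>v. 0)) (at z)"
  unfolding has_derivative_at_alt
proof (intro conjI allI impI bounded_linear_zero)
  fix e :: real assume e: "e > 0"
  obtain r0 where r0: "r0 > 0" "ball z r0 \<subseteq> Z" using Z open_contains_ball by blast
  define K where "K = norm z + 1"
  have K: "K > 0" unfolding K_def by (simp add: add_nonneg_pos)
  define r where "r = min (min r0 1) (min (d / K) (e / (M * K^2 + 1)))"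
  have r: "r > 0" using r0 K M e unfolding r_def by (simp add: add_nonneg_pos)
  show "\<exists>r>0. \<forall>w. norm (w - z) < r \<longrightarrow> norm (g w - g z - 0) \<le> e * norm (w - z)"
  proof (intro exI[of _ r] conjI r allI impI)
    fix w assume w: "norm (w - z) < r"
    have wZ: "w \<in> Z" using w r0 unfolding r_def by (auto simp: dist_norm norm_minus_commute)
    have w1: "norm (w - z) \<le> 1" using w unfolding r_def by simp
    have pb: "\<bar>fst w * snd w\<bar> \<le> K * norm (w - z)" using abs_fst_times_snd_le_near_axes[OF ax w1] unfolding K_def .
    have "K * norm (w - z) < K * (d / K)" using w K unfolding r_def by (intro mult_strict_left_mono) auto
    then have pd: "\<bar>fst w * snd w\<bar> < d" using pb K by simp
    have "norm (g w) \<le> M * (fst w * snd w)^2" by (rule M(3)[OF wZ pd])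
    also have "\<dots> \<le> M * (K * norm (w - z))^2"
      using pb by (intro mult_left_mono M(1) power_mono[where n=2, of "\<bar>fst w * snd w\<bar>", simplified]) simp_all
    also have "\<dots> = (M * K^2 * norm (w - z)) * norm (w - z)" by (simp add: power2_eq_square algebra_simps)
    also have "\<dots> \<le> e * norm (w - z)"
    proof (rule mult_right_mono)
      have "M * K^2 * norm (w - z) \<le> M * K^2 * (e / (M * K^2 + 1))"
        using w unfolding r_def by (intro mult_left_mono) (simp_all add: M(1))
      also have "\<dots> \<le> e"
      proof -
        have pos: "0 < M * K^2 + 1" using M(1) by (simp add: add_nonneg_pos)
        have "M * K^2 \<le> M * K^2 + 1" by simp
        then have le: "M * K^2 * e \<le> e * (M * K^2 + 1)" using e by (simp add: mult_right_mono mult.commute)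
        have "M * K^2 * (e / (M * K^2 + 1)) = (M * K^2 * e) / (M * K^2 + 1)" by simp
        also have "\<dots> \<le> e" using le pos by (simp add: pos_divide_le_eq)
        finally show ?thesis .
      qed
      finally show "M * K^2 * norm (w - z) \<le> e" .
    qed simp
    finally show "norm (g w - g z - 0) \<le> e * norm (w - z)" using gz by simp
  qed
qed

definition quadrantwise_flat_model :: "real \<Rightarrow> real \<Rightarrow> (real \<times> real \<Rightarrow> complex) \<Rightarrow> bool" where
  "quadrantwise_flat_model \<epsilon> \<eta> g \<longleftrightarrow> (\<forall>z\<in>Zset \<epsilon> \<eta>. fst z * snd z = 0 \<longrightarrow> g z = 0) \<and>
     (\<forall>j\<in>{1,2,3,4}. \<exists>f. flat_model_sum (Iint \<eta> j) f \<and> (\<forall>z\<in>Zset \<epsilon> \<eta> \<inter> quadrant j. g z = f z))"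

lemma quadrantwise_flat_model_quadratic_bound:
  assumes \<eta>: "0 < \<eta>" and g: "quadrantwise_flat_model \<epsilon> \<eta> g"
  shows "\<exists>M d. 0 \<le> M \<and> 0 < d \<and>
    (\<forall>w\<in>Zset \<epsilon> \<eta>. \<bar>fst w * snd w\<bar> < d \<longrightarrow> norm (g w) \<le> M * (fst w * snd w)^2)"
proof -
  have "\<exists>M d. 0 < d \<and> (\<forall>w\<in>Zset \<epsilon> \<eta> \<inter> quadrant j. \<bar>fst w * snd w\<bar> < d \<longrightarrow>
      norm (g w) \<le> M * (fst w * snd w)^2)" if j: "j \<in> {1,2,3,4}" for j
  proof -
    obtain f where f: "flat_model_sum (Iint \<eta> j) f" "\<forall>z\<in>Zset \<epsilon> \<eta> \<inter> quadrant j. g z = f z"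
      using g j unfolding quadrantwise_flat_model_def by blast
    obtain M d where "0 < d" and Md: "\<forall>x y. (x, y) \<in> Zset \<epsilon> \<eta> \<and> x \<noteq> 0 \<and> y \<noteq> 0 \<and> x * y \<in> Iint \<eta> j \<and>
        \<bar>x * y\<bar> < d \<longrightarrow> norm (f (x, y)) \<le> M * (x * y)^2"
      using flat_model_sum_bound[OF one_sided_interval_Iint[OF \<eta>] f(1), of \<epsilon> \<eta>] by blast
    moreover have "norm (g w) \<le> M * (fst w * snd w)^2"
      if "w \<in> Zset \<epsilon> \<eta> \<inter> quadrant j" "\<bar>fst w * snd w\<bar> < d" for w
      using quadrant_hyperbolic_sector[OF j that(1)] Md f(2) that by (cases w) (auto simp: hyperbolic_sector_def)
    ultimately show ?thesis by blast
  qed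
  then obtain M d where Md: "\<And>j. j \<in> {1,2,3,4} \<Longrightarrow> 0 < d j"
    "\<And>j w. j \<in> {1,2,3,4} \<Longrightarrow> w \<in> Zset \<epsilon> \<eta> \<inter> quadrant j \<Longrightarrow> \<bar>fst w * snd w\<bar> < d j \<Longrightarrow>
       norm (g w) \<le> M j * (fst w * snd w)^2"
    by metis
  let ?M = "\<Sum>j\<in>{1,2,3,4}. \<bar>M j\<bar>" and ?d = "Min (d ` {1,2,3,4})"
  have "norm (g w) \<le> ?M * (fst w * snd w)^2" if w: "w \<in> Zset \<epsilon> \<eta>" "\<bar>fst w * snd w\<bar> < ?d" for w
  proof (cases "fst w * snd w = 0")
    case True
    then have "g w = 0" using g w(1) unfolding quadrantwise_flat_model_def by blast
    then show ?thesis by simp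
  next
    case False
    define j where "j = quad_index w"
    have j: "j \<in> {1,2,3,4}" "w \<in> quadrant j" using quad_index_off_axes[OF False] unfolding j_def by auto
    have "norm (g w) \<le> M j * (fst w * snd w)^2"
      using Md(2)[OF j(1)] j w Min_le[of "d ` {1,2,3,4}" "d j"] by fastforce
    also have "\<dots> \<le> ?M * (fst w * snd w)^2"
      using j(1) member_le_sum[of j "{1,2,3,4::nat}" "\<lambda>j. \<bar>M j\<bar>"]
      by (intro mult_right_mono) auto
    finally show ?thesis .
  qed
  moreover have "0 < ?d" using Md(1) by simp
  ultimately show ?thesis by (intro exI[of _ ?M] exI[of _ ?d]) (simp add: sum_nonneg)
qed

lemma quadrantwise_flat_model_has_derivative_0:
  assumes \<eta>: "0 < \<eta>" and g: "quadrantwise_flat_model \<epsilon> \<eta> g"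
    and z: "z \<in> Zset \<epsilon> \<eta>" "fst z * snd z = 0"
  shows "(g has_derivative (\<lambda>v. 0)) (at z)"
proof -
  obtain M d where "0 \<le> M" "0 < d" "\<forall>w\<in>Zset \<epsilon> \<eta>. \<bar>fst w * snd w\<bar> < d \<longrightarrow> norm (g w) \<le> M * (fst w * snd w)^2"
    using quadrantwise_flat_model_quadratic_bound[OF \<eta> g] by blast
  moreover have "g z = 0" using g z unfolding quadrantwise_flat_model_def by blast
  ultimately show ?thesis
    by (intro has_derivative_0_of_quadratic_bound[OF open_Zset z]) auto
qed

lemma quadrantwise_flat_model_has_derivative_quadrant:
  assumes \<eta>: "0 < \<eta>" and g: "quadrantwise_flat_model \<epsilon> \<eta> g" and j: "j \<in> {1,2,3,4}"
  shows "\<exists>fx fy. flat_model_sum (Iint \<eta> j) fx \<and> flat_model_sum (Iint \<eta> j) fy \<and>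
    (\<forall>z\<in>Zset \<epsilon> \<eta> \<inter> quadrant j. (g has_derivative (\<lambda>v. of_real (fst v) * fx z + of_real (snd v) * fy z)) (at z))"
proof -
  obtain f where f: "flat_model_sum (Iint \<eta> j) f" "\<forall>z\<in>Zset \<epsilon> \<eta> \<inter> quadrant j. g z = f z"
    using g j unfolding quadrantwise_flat_model_def by blast
  obtain fx fy where fxy: "flat_model_sum (Iint \<eta> j) fx" "flat_model_sum (Iint \<eta> j) fy"
    "\<forall>z\<in>hyperbolic_sector (Iint \<eta> j). (f has_derivative (\<lambda>v. of_real (fst v) * fx z + of_real (snd v) * fy z)) (at z)"
    using flat_model_sum_has_derivative[OF one_sided_interval_open[OF one_sided_interval_Iint[OF \<eta>]] f(1)] by blast
  have open_ZQ: "open (Zset \<epsilon> \<eta> \<inter> quadrant j)" using open_Zset open_quadrant by blast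
  have "(g has_derivative (\<lambda>v. of_real (fst v) * fx z + of_real (snd v) * fy z)) (at z)"
    if z: "z \<in> Zset \<epsilon> \<eta> \<inter> quadrant j" for z
  proof -
    have "(f has_derivative (\<lambda>v. of_real (fst v) * fx z + of_real (snd v) * fy z)) (at z)"
      using fxy(3) quadrant_hyperbolic_sector[OF j z] by blast
    then show ?thesis by (rule has_derivative_transform_within_open[OF _ open_ZQ z]) (use f(2) in simp)
  qed
  then show ?thesis using fxy(1,2) by blast
qed

lemma quadrantwise_flat_model_frechet_derivative:
  assumes \<eta>: "0 < \<eta>" and g: "quadrantwise_flat_model \<epsilon> \<eta> g"
  shows "(\<forall>z\<in>Zset \<epsilon> \<eta>. g differentiable (at z)) \<and>
    quadrantwise_flat_model \<epsilon> \<eta> (\<lambda>z. frechet_derivative g (at z) v)"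
proof -
  have diff: "g differentiable (at z)" if z: "z \<in> Zset \<epsilon> \<eta>" for z
  proof (cases "fst z * snd z = 0")
    case True
    then show ?thesis using quadrantwise_flat_model_has_derivative_0[OF \<eta> g z] unfolding differentiable_def by blast
  next
    case False
    then show ?thesis using quad_index_off_axes[OF False] z
      quadrantwise_flat_model_has_derivative_quadrant[OF \<eta> g] unfolding differentiable_def by blast
  qed
  have "\<exists>f. flat_model_sum (Iint \<eta> j) f \<and> (\<forall>z\<in>Zset \<epsilon> \<eta> \<inter> quadrant j. frechet_derivative g (at z) v = f z)"
    if j: "j \<in> {1,2,3,4}" for j
  proof -
    obtain fx fy where fxy: "flat_model_sum (Iint \<eta> j) fx" "flat_model_sum (Iint \<eta> j) fy"
      "\<forall>z\<in>Zset \<epsilon> \<eta> \<inter> quadrant j. (g has_derivative (\<lambda>v. of_real (fst v) * fx z + of_real (snd v) * fy z)) (at z)"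
      using quadrantwise_flat_model_has_derivative_quadrant[OF \<eta> g j] by blast
    have "flat_model_sum (Iint \<eta> j) (\<lambda>z. of_real (fst v) * fx z + of_real (snd v) * fy z)"
      using one_sided_interval_open[OF one_sided_interval_Iint[OF \<eta>]]
      by (intro flat_model_sum.add flat_model_sum_cmult fxy(1,2))
    moreover have "frechet_derivative g (at z) v = of_real (fst v) * fx z + of_real (snd v) * fy z"
      if "z \<in> Zset \<epsilon> \<eta> \<inter> quadrant j" for z
      using frechet_derivative_at[OF fxy(3)[rule_format, OF that], symmetric] by simp
    ultimately show ?thesis by blast
  qed
  moreover have "frechet_derivative g (at z) v = 0" if "z \<in> Zset \<epsilon> \<eta>" "fst z * snd z = 0" for z
    using frechet_derivative_at[OF quadrantwise_flat_model_has_derivative_0[OF \<eta> g that], symmetric] by simp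
  ultimately show ?thesis using diff unfolding quadrantwise_flat_model_def by blast
qed

lemma quadrantwise_flat_model_smooth_on:
  assumes \<eta>: "0 < \<eta>" and g: "quadrantwise_flat_model \<epsilon> \<eta> g"
  shows "smooth_on (Zset \<epsilon> \<eta>) g"
proof (rule smooth_on_coinduct[where P="quadrantwise_flat_model \<epsilon> \<eta>", OF _ g])
  fix g assume g: "quadrantwise_flat_model \<epsilon> \<eta> g"
  then have "\<forall>z\<in>Zset \<epsilon> \<eta>. g differentiable (at z)"
    using quadrantwise_flat_model_frechet_derivative[OF \<eta>] by blast
  then show "continuous_on (Zset \<epsilon> \<eta>) g \<and> (\<forall>z\<in>Zset \<epsilon> \<eta>. g differentiable (at z)) \<and>
      (\<forall>v. quadrantwise_flat_model \<epsilon> \<eta> (\<lambda>z. frechet_derivative g (at z) v))"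
    using quadrantwise_flat_model_frechet_derivative[OF \<eta> g]
    by (auto intro!: continuous_at_imp_continuous_on differentiable_imp_continuous_within)
qed

definition model_section :: "(nat \<Rightarrow> real \<Rightarrow> complex) \<Rightarrow> real \<times> real \<Rightarrow> complex" where
  "model_section a = (\<lambda>(x, y). if x * y = 0 then 0 else a (quad_index (x, y)) (x * y) * model_phase x y)"

lemma model_section_quadrant:
  "j \<in> {1,2,3,4} \<Longrightarrow> z \<in> quadrant j \<Longrightarrow> model_section a z = flat_model_term (a j) (\<lambda>z. 1) z"
  using quadrant_off_axes[of j z] quad_index_quadrant[of j z]
  unfolding model_section_def flat_model_term_def by (cases z) auto

lemma quadrantwise_flat_model_model_section:
  assumes "\<And>j. j \<in> {1,2,3,4} \<Longrightarrow> flat_smooth_on (Iint \<eta> j) (a j)"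
  shows "quadrantwise_flat_model \<epsilon> \<eta> (model_section a)"
  unfolding quadrantwise_flat_model_def
proof (intro conjI ballI impI)
  fix z :: "real \<times> real" assume "fst z * snd z = 0"
  then show "model_section a z = 0" unfolding model_section_def by (cases z) simp
next
  fix j :: nat assume j: "j \<in> {1,2,3,4}"
  show "\<exists>f. flat_model_sum (Iint \<eta> j) f \<and> (\<forall>z\<in>Zset \<epsilon> \<eta> \<inter> quadrant j. model_section a z = f z)"
    using model_section_quadrant[OF j] assms[OF j]
    by (intro exI[of _ "flat_model_term (a j) (\<lambda>z. 1)"]) (auto intro: flat_model_sum.model_term log_rational.const)
qed

lemma flat_smooth_on_Iint:
  assumes "0 < \<eta>" "smooth_on (Iint \<eta> j) b" "flat_at_0 (Iint \<eta> j) b"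
  shows "flat_smooth_on (Iint \<eta> j) b"
  using assms smooth_on_imp_infinitely_differentiable_on[OF one_sided_interval_open[OF one_sided_interval_Iint]]
  unfolding flat_smooth_on_def flat_at_0_def by blast

lemma leafwise_flat_model_section:
  assumes \<eta>: "0 < \<eta>" and a: "\<And>j. j \<in> {1,2,3,4} \<Longrightarrow> flat_smooth_on (Iint \<eta> j) (a j)"
  shows "leafwise_flat (Zset \<epsilon> \<eta>) (model_section a)"
  unfolding leafwise_flat_def
proof (intro ballI allI)
  fix z t assume z: "z \<in> Zset \<epsilon> \<eta>"
  have g: "quadrantwise_flat_model \<epsilon> \<eta> (model_section a)"
    by (rule quadrantwise_flat_model_model_section[OF a])
  show "nabla (model_section a) z (t *\<^sub>R leaf_field z) = 0"
  proof (cases "fst z * snd z = 0")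
    case True
    then have "model_section a z = 0" unfolding model_section_def by (cases z) simp
    moreover have "frechet_derivative (model_section a) (at z) = (\<lambda>v. 0)"
      using frechet_derivative_at[OF quadrantwise_flat_model_has_derivative_0[OF \<eta> g z True]] by simp
    ultimately show ?thesis unfolding nabla_def by simp
  next
    case False
    define j where "j = quad_index z"
    obtain x y where xy: "z = (x, y)" by (cases z)
    have j: "j \<in> {1,2,3,4}" "(x, y) \<in> Zset \<epsilon> \<eta> \<inter> quadrant j"
      using quad_index_off_axes[OF False] z unfolding j_def xy by auto
    have nz: "x \<noteq> 0" "y \<noteq> 0" "x * y \<in> Iint \<eta> j"
      using quadrant_hyperbolic_sector[OF j] unfolding hyperbolic_sector_def by auto
    have "infinitely_differentiable_on (Iint \<eta> j) (a j)" using a[OF j(1)] unfolding flat_smooth_on_def by blast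
    from infinitely_differentiable_on_has_vector_derivative[OF this nz(3), of 0]
    have hb: "(a j has_vector_derivative nth_vderiv 1 (a j) (x * y)) (at (x * y))" by simp
    have hm: "((\<lambda>z. 1::real) has_derivative (\<lambda>v. fst v * 0 + snd v * 0)) (at (x, y))" by simp
    note D = flat_model_term_has_derivative[OF nz(1,2) hb hm]
    have "open (Zset \<epsilon> \<eta> \<inter> quadrant j)" using open_Zset open_quadrant by blast
    then have "frechet_derivative (model_section a) (at (x, y)) =
        frechet_derivative (flat_model_term (a j) (\<lambda>z. 1)) (at (x, y))"
      using model_section_quadrant[OF j(1)] by (intro frechet_derivative_cong_open[OF _ j(2)]) auto
    note F = trans[OF this frechet_derivative_at[OF D, symmetric]]
    have "model_section a (x, y) = a j (x * y) * model_phase x y"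
      using model_section_quadrant[OF j(1)] j(2) unfolding flat_model_term_def by simp
    then show ?thesis unfolding xy nabla_def F leaf_field_def Theta_def
      by (simp add: algebra_simps)
  qed
qed

lemma nth_vderiv_zero: "nth_vderiv n (\<lambda>t::real. 0::complex) = (\<lambda>t. 0)"
  by (induction n) (simp_all add: nth_vderiv_Suc)

lemma leafwise_flat_representation:
  fixes \<sigma> :: "real \<times> real \<Rightarrow> complex"
  assumes \<eta>: "0 < \<eta>" "\<eta> < \<epsilon>\<^sup>2"
    and \<sigma>: "smooth_on (Zset \<epsilon> \<eta>) \<sigma>" and lf: "leafwise_flat (Zset \<epsilon> \<eta>) \<sigma>"
  shows "\<exists>a::nat \<Rightarrow> real \<Rightarrow> complex. \<forall>j\<in>{1,2,3,4}.
           smooth_on (Iint \<eta> j) (a j) \<and> flat_at_0 (Iint \<eta> j) (a j) \<and>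
           (\<forall>x y. (x, y) \<in> Zset \<epsilon> \<eta> \<inter> quadrant j \<longrightarrow> \<sigma> (x, y) = a j (x * y) * model_phase x y)"
proof (cases "\<epsilon> > 0")
  case False
  then have "Zset \<epsilon> \<eta> = {}" unfolding Zset_def by auto
  moreover have "smooth_on (Iint \<eta> j) (\<lambda>t. 0::complex)" for j
    using one_sided_interval_open[OF one_sided_interval_Iint[OF \<eta>(1)]]
    by (rule infinitely_differentiable_on_imp_smooth_on)
       (simp add: infinitely_differentiable_on_def nth_vderiv_zero)
  ultimately show ?thesis
    by (intro exI[of _ "\<lambda>j t. 0"]) (simp add: flat_at_0_def nth_vderiv_zero)
next
  case True
  have "\<exists>a. smooth_on (Iint \<eta> j) a \<and> flat_at_0 (Iint \<eta> j) a \<and>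
     (\<forall>x y. (x, y) \<in> Zset \<epsilon> \<eta> \<inter> quadrant j \<longrightarrow> \<sigma> (x, y) = a (x * y) * model_phase x y)"
    if j: "j \<in> {1,2,3,4}" for j
  proof -
    obtain sx sy :: real where "\<bar>sx\<bar> = 1" "\<bar>sy\<bar> = 1"
      and "\<And>t. t \<in> Iint \<eta> j \<longleftrightarrow> 0 < sx * sy * t \<and> \<bar>t\<bar> < \<eta>"
      and "\<And>x y. (x, y) \<in> quadrant j \<longleftrightarrow> 0 < sx * x \<and> 0 < sy * y"
    proof -
      consider "j = 1" | "j = 2" | "j = 3" | "j = 4" using j by auto
      then show thesis
        by cases ((rule that[of 1 1] that[of "-1" 1] that[of "-1" "-1"] that[of 1 "-1"];
                   auto simp: Iint_def quadrant_def zero_less_mult_iff); fail)+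
    qed
    then show ?thesis
      by (rule leafwise_flat_quadrant_representation[OF \<eta> True \<sigma> lf _ _ one_sided_interval_Iint[OF \<eta>(1)]])
  qed
  then have "\<forall>j\<in>{1,2,3,4::nat}. \<exists>a. smooth_on (Iint \<eta> j) a \<and> flat_at_0 (Iint \<eta> j) a \<and>
     (\<forall>x y. (x, y) \<in> Zset \<epsilon> \<eta> \<inter> quadrant j \<longrightarrow> \<sigma> (x, y) = a (x * y) * model_phase x y)"
    by blast
  then show ?thesis by (rule bchoice)
qed

theorem proposition11:
  fixes \<epsilon> \<eta> :: real
  assumes "0 < \<eta>" and "\<eta> < \<epsilon>\<^sup>2"
  shows "(\<forall>\<sigma>::real \<times> real \<Rightarrow> complex.
            smooth_on (Zset \<epsilon> \<eta>) \<sigma> \<and> leafwise_flat (Zset \<epsilon> \<eta>) \<sigma> \<longrightarrow>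
            (\<exists>a::nat \<Rightarrow> real \<Rightarrow> complex. \<forall>j\<in>{1,2,3,4}.
                smooth_on (Iint \<eta> j) (a j) \<and> flat_at_0 (Iint \<eta> j) (a j) \<and>
                (\<forall>x y. (x, y) \<in> Zset \<epsilon> \<eta> \<inter> quadrant j \<longrightarrow>
                        \<sigma> (x, y) = a j (x * y) * model_phase x y)))
       \<and>
         (\<forall>a::nat \<Rightarrow> real \<Rightarrow> complex.
            (\<forall>j\<in>{1,2,3,4}. smooth_on (Iint \<eta> j) (a j) \<and> flat_at_0 (Iint \<eta> j) (a j)) \<longrightarrow>
            (let \<sigma> = (\<lambda>(x, y). if x * y = 0 then 0
                                else a (quad_index (x, y)) (x * y) * model_phase x y)
             in smooth_on (Zset \<epsilon> \<eta>) \<sigma> \<and> leafwise_flat (Zset \<epsilon> \<eta>) \<sigma>))"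
proof (intro conjI allI impI)
  fix \<sigma> :: "real \<times> real \<Rightarrow> complex"
  assume "smooth_on (Zset \<epsilon> \<eta>) \<sigma> \<and> leafwise_flat (Zset \<epsilon> \<eta>) \<sigma>"
  then show "\<exists>a::nat \<Rightarrow> real \<Rightarrow> complex. \<forall>j\<in>{1,2,3,4}.
      smooth_on (Iint \<eta> j) (a j) \<and> flat_at_0 (Iint \<eta> j) (a j) \<and>
      (\<forall>x y. (x, y) \<in> Zset \<epsilon> \<eta> \<inter> quadrant j \<longrightarrow> \<sigma> (x, y) = a j (x * y) * model_phase x y)"
    using leafwise_flat_representation[OF assms] by blast
next
  fix a :: "nat \<Rightarrow> real \<Rightarrow> complex"
  assume "\<forall>j\<in>{1,2,3,4}. smooth_on (Iint \<eta> j) (a j) \<and> flat_at_0 (Iint \<eta> j) (a j)"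
  then have a: "\<And>j. j \<in> {1,2,3,4} \<Longrightarrow> flat_smooth_on (Iint \<eta> j) (a j)"
    using flat_smooth_on_Iint[OF assms(1)] by blast
  show "let \<sigma> = (\<lambda>(x, y). if x * y = 0 then 0 else a (quad_index (x, y)) (x * y) * model_phase x y)
        in smooth_on (Zset \<epsilon> \<eta>) \<sigma> \<and> leafwise_flat (Zset \<epsilon> \<eta>) \<sigma>"
    unfolding Let_def model_section_def[symmetric]
    using quadrantwise_flat_model_smooth_on[OF assms(1) quadrantwise_flat_model_model_section[OF a]]
      leafwise_flat_model_section[OF assms(1) a] by blast
qed

end
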